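(* Let $p$ be a prime and let $n=\sum_{i=0}^k a_ip^i$ be the $p$-adic expansion of $n$ (with $0\le a_i<p$), with $a_k\ne0$. Let $\gamma$ be a partition of $a_0$. Then \[|\mathrm{cd}(\Omega(n;\gamma))|=|\Omega(n;\gamma)|\ge\left\lfloor\frac{a_k+1}{2}\right\rfloor\cdot\prod_{i=1}^{k-1}(a_i+1).\]
   Context: For a partition $\gamma=(\gamma_1,\ldots,\gamma_\ell)$ and natural numbers $x,y$, $\gamma\star(x,y)=(\gamma_1+x,\gamma_2,\ldots,\gamma_\ell,1^y)$. For a partition $\lambda$ of $n$, $\chi^\lambda$ is the corresponding irreducible character of $\mathfrak{S}_n$, $\lambda'$ is the conjugate partition, $C_p(\lambda)$ is the $p$-core of $\lambda$ (obtained by successively removing all hooks of length $p$), and $\lambda\vdash_{p'}n$ means $p\nmid\chi^\lambda(1)$. Writing $n=wp+m$ with $m<p$ and $\gamma$ a $p$-core partition of $m$, set $H(n;\gamma)=\{\lambda\vdash_{p'}n : C_p(\lambda)=\gamma,\ \lambda=\gamma\star(a,n-m-a)\text{ for some }a\}$ and $\Omega(n;\gamma)=\{\lambda\in H(n;\gamma):\lambda_1>(\lambda')_1\}$. For a set $X$ of partitions of $n$, $\mathrm{cd}(X)=\{\chi^\lambda(1):\lambda\in X\}$. *)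

theory Defs
  imports Main "HOL-Computational_Algebra.Primes"
begin

definition is_partition :: "nat list \<Rightarrow> bool" where
  "is_partition la \<longleftrightarrow> sorted (rev la) \<and> 0 \<notin> set la"

definition partition_of :: "nat list \<Rightarrow> nat \<Rightarrow> bool" where
  "partition_of la n \<longleftrightarrow> is_partition la \<and> sum_list la = n"

text \<open>Young diagram (0-indexed cells (row, column)).\<close>
definition diagram :: "nat list \<Rightarrow> (nat \<times> nat) set" where
  "diagram la = {(i, j). i < length la \<and> j < la ! i}"

text \<open>Conjugate partition entries: (la')_j (0-indexed column j).\<close>
definition conj_part :: "nat list \<Rightarrow> nat \<Rightarrow> nat" where
  "conj_part la j = card {i. i < length la \<and> j < la ! i}"

definition first_part :: "nat list \<Rightarrow> nat" where
  "first_part la = (if la = [] then 0 else hd la)"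

definition first_part_conj :: "nat list \<Rightarrow> nat" where
  "first_part_conj la = conj_part la 0"

definition hook_length :: "nat list \<Rightarrow> nat \<times> nat \<Rightarrow> nat" where
  "hook_length la c = (la ! fst c - snd c) + (conj_part la (snd c) - fst c) - 1"

text \<open>Degree chi^la(1) of the irreducible character of S_n labelled by la,
  given by the hook length formula.\<close>
definition char_degree :: "nat list \<Rightarrow> nat" where
  "char_degree la = fact (sum_list la) div (\<Prod>c\<in>diagram la. hook_length la c)"

text \<open>Rim hooks (border strips): connected skew diagrams without 2x2 squares.\<close>
definition cell_adj :: "nat \<times> nat \<Rightarrow> nat \<times> nat \<Rightarrow> bool" where
  "cell_adj c d \<longleftrightarrow>
     (fst c = fst d \<and> (snd d = Suc (snd c) \<or> snd c = Suc (snd d))) \<or>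
     (snd c = snd d \<and> (fst d = Suc (fst c) \<or> fst c = Suc (fst d)))"

definition cells_connected :: "(nat \<times> nat) set \<Rightarrow> bool" where
  "cells_connected S \<longleftrightarrow> S \<noteq> {} \<and>
     (\<forall>c\<in>S. \<forall>d\<in>S. (\<lambda>x y. x \<in> S \<and> y \<in> S \<and> cell_adj x y)\<^sup>*\<^sup>* c d)"

definition no_square :: "(nat \<times> nat) set \<Rightarrow> bool" where
  "no_square S \<longleftrightarrow> \<not> (\<exists>i j. (i, j) \<in> S \<and> (Suc i, j) \<in> S \<and> (i, Suc j) \<in> S \<and> (Suc i, Suc j) \<in> S)"

definition remove_hook :: "nat \<Rightarrow> nat list \<Rightarrow> nat list \<Rightarrow> bool" where
  "remove_hook p la mu \<longleftrightarrow> is_partition mu \<and> diagram mu \<subseteq> diagram la \<and>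
     card (diagram la - diagram mu) = p \<and>
     cells_connected (diagram la - diagram mu) \<and> no_square (diagram la - diagram mu)"

definition is_p_core_of :: "nat \<Rightarrow> nat list \<Rightarrow> nat list \<Rightarrow> bool" where
  "is_p_core_of p la gm \<longleftrightarrow> (remove_hook p)\<^sup>*\<^sup>* la gm \<and> \<not> (\<exists>mu. remove_hook p gm mu)"

text \<open>gm \<star> (x,y) = (gm_1 + x, gm_2, ..., gm_l, 1^y); for empty gm, gm_1 = 0
  and a resulting zero part is discarded.\<close>
definition star :: "nat list \<Rightarrow> nat \<Rightarrow> nat \<Rightarrow> nat list" where
  "star gm x y = filter (\<lambda>t. t \<noteq> 0) ((first_part gm + x) # tl gm @ replicate y 1)"

text \<open>H(n;gm), with n = wp + m, m < p.\<close>
definition H_set :: "nat \<Rightarrow> nat \<Rightarrow> nat list \<Rightarrow> nat list set" where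
  "H_set p n gm = {la. partition_of la n \<and> \<not> p dvd char_degree la \<and> is_p_core_of p la gm \<and>
      (\<exists>a. a \<le> n - n mod p \<and> la = star gm a (n - n mod p - a))}"

definition Omega_set :: "nat \<Rightarrow> nat \<Rightarrow> nat list \<Rightarrow> nat list set" where
  "Omega_set p n gm = {la \<in> H_set p n gm. first_part la > first_part_conj la}"

definition cd :: "nat list set \<Rightarrow> nat set" where
  "cd X = char_degree ` X"

end

theory Submission
  imports Defs "HOL-Computational_Algebra.Polynomial" "HOL-Library.FuncSet"
begin

text \<open>
  The hook length formula is proved in the form \<open>char_degree la * hook_prod la = n!\<close> via
  beta-sets: for the set \<open>B\<close> of first-column hook lengths, \<open>hook_prod la * diff_prod B\<close>
  equals \<open>\<Prod>b\<in>B. b!\<close>, and \<open>\<Prod>b\<in>B. b!\<close> divides \<open>(\<Sum>B - card B choose 2)! * diff_prod B\<close>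
  by induction on \<open>\<Sum>B\<close>, the step being a branching identity that comes from a
  partial-fraction (Lagrange interpolation) identity.

  For \<open>la = gm \<star> (x, y)\<close> the beta-set, hence the hook product, is explicit. If \<open>la\<close> has
  \<open>p\<close>-core \<open>gm \<noteq> []\<close> then \<open>p\<close> divides \<open>x\<close> (compare content sums modulo \<open>p\<close>), and then the
  part of \<open>n! / hook_prod la\<close> not involving \<open>x, y\<close> is prime to \<open>p\<close>; so \<open>p\<close> does not divide
  the degree as soon as \<open>p\<close> does not divide \<open>(x + y) choose x\<close>, which Kummer's criterion
  (no carries in base \<open>p\<close>) guarantees for \<open>x = \<Sum>i. z i * p^i\<close> with \<open>z i \<le> a i\<close>.
  Requiring \<open>z k > a k / 2\<close> puts the shape in \<open>\<Omega>\<close>, and there are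
  \<open>\<lfloor>(a k + 1)/2\<rfloor> * \<Prod>(a i + 1)\<close> such \<open>z\<close>. For \<open>gm = []\<close> the shape is a hook of degree
  \<open>(n - 1) choose y\<close>, and \<open>x\<close> sometimes has to be shifted by one. Finally, the explicit
  hook product is strictly increasing in \<open>x\<close> on \<open>\<Omega>\<close>, so degrees on \<open>\<Omega>\<close> are distinct.
\<close>

section \<open>Partitions and Young diagrams\<close>

lemma is_partition_iff:
  "is_partition la \<longleftrightarrow> (\<forall>i j. i \<le> j \<longrightarrow> j < length la \<longrightarrow> la!j \<le> la!i) \<and> (\<forall>i<length la. 0 < la!i)"
  unfolding is_partition_def sorted_rev_iff_nth_mono
  by (auto simp: in_set_conv_nth)

lemma partition_nth_mono: "is_partition la \<Longrightarrow> i \<le> j \<Longrightarrow> j < length la \<Longrightarrow> la!j \<le> la!i"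
  by (simp add: is_partition_iff)

lemma partition_nth_pos: "is_partition la \<Longrightarrow> i < length la \<Longrightarrow> 0 < la!i"
  by (simp add: is_partition_iff)

lemma finite_diagram: "finite (diagram la)"
proof -
  have "diagram la \<subseteq> {..<length la} \<times> {..<sum_list la + 1}"
  proof
    fix c assume "c \<in> diagram la"
    then obtain i j where c: "c = (i,j)" "i < length la" "j < la!i" by (auto simp: diagram_def)
    have "la!i \<le> sum_list la" using c(2) by (simp add: elem_le_sum_list)
    thus "c \<in> {..<length la} \<times> {..<sum_list la + 1}" using c by auto
  qed
  thus ?thesis by (rule finite_subset) auto
qed

lemma diagram_eq_Union: "diagram la = (\<Union>i<length la. {i} \<times> {..<la!i})"
  by (auto simp: diagram_def)

lemma card_diagram: "card (diagram la) = sum_list la"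
proof -
  have "card (diagram la) = (\<Sum>i<length la. card ({i} \<times> {..<la!i}))"
    unfolding diagram_eq_Union by (rule card_UN_disjoint) auto
  also have "\<dots> = (\<Sum>i<length la. la!i)" by (simp add: card_cartesian_product)
  also have "\<dots> = sum_list la" by (simp add: sum_list_sum_nth atLeast0LessThan)
  finally show ?thesis .
qed

lemma mem_diagram_iff: "(i,j) \<in> diagram la \<longleftrightarrow> i < length la \<and> j < la!i"
  by (simp add: diagram_def)

lemma diagram_downward_closed:
  assumes "is_partition la" "(i,j) \<in> diagram la" "i' \<le> i" "j' \<le> j"
  shows "(i',j') \<in> diagram la"
proof -
  have "i < length la" "j < la!i" using assms(2) by (auto simp: diagram_def)
  moreover have "la!i \<le> la!i'" using partition_nth_mono[OF assms(1) assms(3)] \<open>i < length la\<close>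
    by simp
  ultimately show ?thesis using assms(3,4) by (auto simp: diagram_def)
qed

lemma conj_part_0_eq_length: "is_partition la \<Longrightarrow> conj_part la 0 = length la"
  unfolding conj_part_def using partition_nth_pos
    by (metis (no_types, lifting) Collect_cong card_Collect_less_nat)

lemma is_partition_single: "is_partition [1]" by (simp add: is_partition_def)

lemma length_le_sum_list:
  assumes "is_partition la"
  shows "length la \<le> sum_list la"
proof -
  have "\<forall>x\<in>set la. 1 \<le> x" using assms unfolding is_partition_def
    by (metis Suc_leI neq0_conv One_nat_def)
  then show ?thesis by (induction la) auto
qed

lemma hd_le_sum_list: "la \<noteq> [] \<Longrightarrow> la!0 \<le> sum_list (la :: nat list)"
  using elem_le_sum_list[of 0 la] by simp

section \<open>Hook products and beta-sets\<close>

definition absdiff :: "nat \<Rightarrow> nat \<Rightarrow> nat" where "absdiff a v = (if v < a then a - v else v - a)"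

definition diff_prod :: "nat set \<Rightarrow> nat" where "diff_prod B = (\<Prod>u\<in>B. \<Prod>v\<in>{v\<in>B. v<u}. (u - v))"

definition fact_prod_set :: "nat set \<Rightarrow> nat" where "fact_prod_set B = (\<Prod>b\<in>B. fact b)"

lemma diff_prod_pos: "0 < diff_prod B"
  unfolding diff_prod_def by (rule prod_pos, rule prod_pos) auto

lemma diff_prod_empty[simp]: "diff_prod {} = 1" by (simp add: diff_prod_def)

lemma diff_prod_insert:
  assumes "finite S" "a \<notin> S"
  shows "diff_prod (insert a S) = diff_prod S * (\<Prod>v\<in>S. absdiff a v)"
proof -
  have fS: "finite {v\<in>S. v<u}" for u using assms(1) by auto
  have A: "(\<Prod>v\<in>{v \<in> insert a S. v < u}. u - v) = (\<Prod>v\<in>{v\<in>S. v<u}. u - v) * (if a < u then u - a else 1)"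
    if "u \<in> S" for u
  proof (cases "a < u")
    case True
    then have "{v \<in> insert a S. v < u} = insert a {v\<in>S. v<u}" by auto
    then show ?thesis using True assms fS by simp
  next
    case False
    then have "{v \<in> insert a S. v < u} = {v\<in>S. v<u}" by auto
    then show ?thesis using False by simp
  qed
  have "diff_prod (insert a S) =
      (\<Prod>v\<in>{v \<in> insert a S. v < a}. a - v) * (\<Prod>u\<in>S. \<Prod>v\<in>{v \<in> insert a S. v < u}. u - v)"
    unfolding diff_prod_def using assms by simp
  also have "{v \<in> insert a S. v < a} = {v\<in>S. v<a}" by auto
  also have "(\<Prod>u\<in>S. \<Prod>v\<in>{v \<in> insert a S. v < u}. u - v) = diff_prod S * (\<Prod>u\<in>S. if a < u then u - a else 1)"
    unfolding diff_prod_def using A by (simp add: prod.distrib)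
  also have "(\<Prod>u\<in>S. if a < u then u - a else 1) = (\<Prod>u\<in>{u\<in>S. a<u}. u - a)"
    using assms(1) by (simp add: prod.inter_filter)
  finally have "diff_prod (insert a S) = diff_prod S * ((\<Prod>v\<in>{v\<in>S. v<a}. a - v) * (\<Prod>u\<in>{u\<in>S. a<u}. u - a))"
    by (simp add: ac_simps)
  also have "(\<Prod>v\<in>{v\<in>S. v<a}. a - v) * (\<Prod>u\<in>{u\<in>S. a<u}. u - a) = (\<Prod>v\<in>S. absdiff a v)"
  proof -
    have "S = {v\<in>S. v<a} \<union> {u\<in>S. a<u}" using assms(2) by auto (metis nat_neq_iff)
    then have "(\<Prod>v\<in>S. absdiff a v) = (\<Prod>v\<in>{v\<in>S. v<a} \<union> {u\<in>S. a<u}. absdiff a v)" by simp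
    also have "\<dots> = (\<Prod>v\<in>{v\<in>S. v<a}. absdiff a v) * (\<Prod>v\<in>{u\<in>S. a<u}. absdiff a v)"
      by (rule prod.union_disjoint) (use assms(1) in auto)
    also have "\<dots> = (\<Prod>v\<in>{v\<in>S. v<a}. a - v) * (\<Prod>u\<in>{u\<in>S. a<u}. u - a)"
      by (intro arg_cong2[where f="(*)"] prod.cong) (auto simp: absdiff_def)
    finally show ?thesis by simp
  qed
  finally show ?thesis .
qed

lemma diff_prod_translate: "diff_prod ((+) s ` B) = diff_prod B"
proof -
  have inj: "inj_on ((+) s) X" for X by (rule inj_onI) simp
  have "diff_prod ((+) s ` B) = (\<Prod>u\<in>B. \<Prod>v\<in>{v\<in>(+) s ` B. v < s + u}. (s + u - v))"
    unfolding diff_prod_def by (simp add: prod.reindex[OF inj])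
  also have "\<dots> = (\<Prod>u\<in>B. \<Prod>v\<in>(+) s ` {v\<in>B. v < u}. (s + u - v))"
    by (intro prod.cong refl) auto
  also have "\<dots> = diff_prod B" unfolding diff_prod_def by (simp add: prod.reindex[OF inj])
  finally show ?thesis .
qed

lemma fact_prod_set_insert: "finite S \<Longrightarrow> a \<notin> S \<Longrightarrow> fact_prod_set (insert a S) = fact a * fact_prod_set S"
  by (simp add: fact_prod_set_def)

lemma fact_prod_set_empty[simp]: "fact_prod_set {} = 1" by (simp add: fact_prod_set_def)

lemma fact_prod_set_pos: "0 < fact_prod_set B" unfolding fact_prod_set_def by (rule prod_pos) simp

definition hook_prod :: "nat list \<Rightarrow> nat" where "hook_prod la = (\<Prod>c\<in>diagram la. hook_length la c)"

definition beta_set :: "nat list \<Rightarrow> nat set" where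
  "beta_set la = (\<lambda>i. la!i + length la - 1 - i) ` {..<length la}"

definition drop_first_col :: "nat list \<Rightarrow> nat list" where
  "drop_first_col la = map (\<lambda>a. a - 1) (takeWhile (\<lambda>a. 1 < a) la)"

lemma length_drop_first_col: "length (drop_first_col la) = length (takeWhile (\<lambda>a. 1 < a) la)"
  by (simp add: drop_first_col_def)

lemma drop_first_col_nth: "i < length (drop_first_col la) \<Longrightarrow> drop_first_col la ! i = la ! i - 1"
  by (simp add: drop_first_col_def takeWhile_nth)

lemma length_drop_first_col_le: "length (drop_first_col la) \<le> length la"
  by (simp add: drop_first_col_def length_takeWhile_le)

lemma less_length_drop_first_col_iff:
  assumes "is_partition la" "i < length la"
  shows "i < length (drop_first_col la) \<longleftrightarrow> 1 < la!i"
proof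
  assume "i < length (drop_first_col la)"
  then have "i < length (takeWhile (\<lambda>a. 1 < a) la)" by (simp add: length_drop_first_col)
  then have "takeWhile (\<lambda>a. 1 < a) la ! i \<in> set (takeWhile (\<lambda>a. 1 < a) la)" by (rule nth_mem)
  then have "1 < takeWhile (\<lambda>a. 1 < a) la ! i" by (rule set_takeWhileD[THEN conjunct2])
  thus "1 < la!i" using \<open>i < length (takeWhile _ la)\<close> by (simp add: takeWhile_nth)
next
  assume h: "1 < la!i"
  show "i < length (drop_first_col la)"
  proof (rule ccontr)
    let ?t = "length (takeWhile (\<lambda>a. 1 < a) la)"
    assume "\<not> i < length (drop_first_col la)"
    then have le: "?t \<le> i" by (simp add: length_drop_first_col)
    then have lt: "?t < length la" using assms(2) by simp
    have "\<not> 1 < la ! ?t" using nth_length_takeWhile[of "\<lambda>a. 1 < a" la] lt by blast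
    moreover have "la!i \<le> la!?t" using partition_nth_mono[OF assms(1) le assms(2)] .
    ultimately show False using h by simp
  qed
qed

lemma is_partition_drop_first_col:
  assumes "is_partition la" shows "is_partition (drop_first_col la)"
  unfolding is_partition_iff
proof (intro conjI allI impI)
  fix i j assume ij: "i \<le> j" "j < length (drop_first_col la)"
  have "j < length la" using ij(2) length_drop_first_col_le by (meson order_less_le_trans)
  then show "drop_first_col la ! j \<le> drop_first_col la ! i"
    using ij partition_nth_mono[OF assms ij(1)] drop_first_col_nth[of i la] drop_first_col_nth[of j la]
      by simp
next
  fix i assume i: "i < length (drop_first_col la)"
  then have "i < length la" using length_drop_first_col_le by (meson order_less_le_trans)
  then show "0 < drop_first_col la ! i"
    using less_length_drop_first_col_iff[OF assms] i drop_first_col_nth[OF i] by simp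
qed

lemma conj_part_drop_first_col:
  assumes "is_partition la"
  shows "conj_part (drop_first_col la) j = conj_part la (Suc j)"
proof -
  have "{i. i < length (drop_first_col la) \<and> j < drop_first_col la ! i} =
      {i. i < length la \<and> Suc j < la ! i}"
  proof (intro set_eqI iffI; clarify)
    fix i assume "i < length (drop_first_col la)"
    moreover assume "j < drop_first_col la ! i"
    ultimately show "i < length la \<and> Suc j < la ! i"
      using drop_first_col_nth[of i la] length_drop_first_col_le[of la] by simp
  next
    fix i assume "i < length la" "Suc j < la ! i"
    then have "i < length (drop_first_col la)" using less_length_drop_first_col_iff[OF assms]
      by simp
    then show "i < length (drop_first_col la) \<and> j < drop_first_col la ! i"
      using drop_first_col_nth[of i la] \<open>Suc j < la ! i\<close> by simp
  qed
  thus ?thesis by (simp add: conj_part_def)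
qed

lemma diagram_first_col_split:
  assumes "is_partition la"
  shows "diagram la = (\<lambda>i. (i,0)) ` {..<length la} \<union> (\<lambda>(i,j). (i, Suc j)) ` diagram (drop_first_col la)"
proof (intro set_eqI iffI)
  fix c assume c: "c \<in> diagram la"
  then obtain i j where ij: "c = (i,j)" "i < length la" "j < la!i" by (auto simp: diagram_def)
  show "c \<in> (\<lambda>i. (i,0)) ` {..<length la} \<union> (\<lambda>(i,j). (i, Suc j)) ` diagram (drop_first_col la)"
  proof (cases j)
    case 0 then show ?thesis using ij by auto
  next
    case (Suc j')
    then have "i < length (drop_first_col la)"
      using less_length_drop_first_col_iff[OF assms ij(2)] ij by simp
    moreover have "j' < drop_first_col la ! i" using drop_first_col_nth[OF calculation] ij Suc
      by simp
    ultimately have "(i,j') \<in> diagram (drop_first_col la)" by (simp add: diagram_def)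
    then show ?thesis using ij Suc by force
  qed
next
  fix c assume "c \<in> (\<lambda>i. (i,0)) ` {..<length la} \<union> (\<lambda>(i,j). (i, Suc j)) ` diagram (drop_first_col la)"
  then show "c \<in> diagram la"
  proof
    assume "c \<in> (\<lambda>i. (i,0)) ` {..<length la}"
    then show ?thesis using partition_nth_pos[OF assms] by (auto simp: diagram_def)
  next
    assume "c \<in> (\<lambda>(i,j). (i, Suc j)) ` diagram (drop_first_col la)"
    then obtain i j where ij: "c = (i, Suc j)" "i < length (drop_first_col la)" "j < drop_first_col la ! i"
      by (auto simp: diagram_def)
    have "i < length la" using ij(2) length_drop_first_col_le[of la] by linarith
    moreover have "Suc j < la ! i" using ij drop_first_col_nth[of i la] by simp
    ultimately show ?thesis using ij(1) by (simp add: diagram_def)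
  qed
qed

lemma hook_length_first_col:
  assumes "is_partition la" "i < length la"
  shows "hook_length la (i,0) = la!i + length la - 1 - i"
  using partition_nth_pos[OF assms] assms(2)
    by (simp add: hook_length_def conj_part_0_eq_length[OF assms(1)])

lemma hook_length_drop_first_col:
  assumes "is_partition la" "(i,j) \<in> diagram (drop_first_col la)"
  shows "hook_length la (i, Suc j) = hook_length (drop_first_col la) (i,j)"
proof -
  have "i < length (drop_first_col la)" using assms(2) by (simp add: diagram_def)
  then show ?thesis by (simp add: hook_length_def conj_part_drop_first_col[OF assms(1)] drop_first_col_nth)
qed

lemma hook_prod_drop_first_col:
  assumes "is_partition la"
  shows "hook_prod la = (\<Prod>i<length la. la!i + length la - 1 - i) * hook_prod (drop_first_col la)"
proof -
  have inj1: "inj_on (\<lambda>i. (i,0::nat)) X" for X by (rule inj_onI) simp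
  have inj2: "inj_on (\<lambda>(i,j). (i, Suc j)) X" for X by (rule inj_onI) auto
  have fin: "finite (diagram (drop_first_col la))" by (rule finite_diagram)
  have "hook_prod la = (\<Prod>c\<in>(\<lambda>i. (i,0)) ` {..<length la}. hook_length la c) *
                (\<Prod>c\<in>(\<lambda>(i,j). (i, Suc j)) ` diagram (drop_first_col la). hook_length la c)"
    unfolding hook_prod_def diagram_first_col_split[OF assms]
    by (rule prod.union_disjoint) (use fin in auto)
  also have "(\<Prod>c\<in>(\<lambda>i. (i,0)) ` {..<length la}. hook_length la c) = (\<Prod>i<length la. la!i + length la - 1 - i)"
    by (simp add: prod.reindex[OF inj1] hook_length_first_col[OF assms])
  also have "(\<Prod>c\<in>(\<lambda>(i,j). (i, Suc j)) ` diagram (drop_first_col la). hook_length la c) =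
      hook_prod (drop_first_col la)"
    unfolding hook_prod_def prod.reindex[OF inj2]
    by (rule prod.cong) (auto simp: hook_length_drop_first_col[OF assms])
  finally show ?thesis .
qed

lemma sum_list_drop_first_col:
  assumes "is_partition la"
  shows "sum_list la = length la + sum_list (drop_first_col la)"
proof -
  have inj1: "inj_on (\<lambda>i. (i,0::nat)) X" for X by (rule inj_onI) simp
  have inj2: "inj_on (\<lambda>(i,j). (i, Suc j)) X" for X by (rule inj_onI) auto
  have "card (diagram la) = card ((\<lambda>i. (i,0::nat)) ` {..<length la}) + card ((\<lambda>(i,j). (i, Suc j)) ` diagram (drop_first_col la))"
    unfolding diagram_first_col_split[OF assms]
      by (rule card_Un_disjoint) (use finite_diagram in auto)
  thus ?thesis by (simp add: card_image[OF inj1] card_image[OF inj2] card_diagram)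
qed

lemma beta_set_inj:
  assumes "is_partition la"
  shows "inj_on (\<lambda>i. la!i + length la - 1 - i) {..<length la}"
proof (rule inj_onI)
  fix i j assume ij: "i \<in> {..<length la}" "j \<in> {..<length la}" "la!i + length la - 1 - i =
      la!j + length la - 1 - j"
  show "i = j"
  proof (rule ccontr)
    assume "i \<noteq> j"
    then consider "i < j" | "j < i" by linarith
    then show False
    proof cases
      case 1 then show False using partition_nth_mono[OF assms, of i j] ij by simp
    next
      case 2 then show False using partition_nth_mono[OF assms, of j i] ij by simp
    qed
  qed
qed

lemma finite_beta_set: "finite (beta_set la)" by (simp add: beta_set_def)

lemma prod_beta_set:
  assumes "is_partition la"
  shows "(\<Prod>i<length la. la!i + length la - 1 - i) = (\<Prod>b\<in>beta_set la. b)"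
proof -
  have "(\<Prod>b\<in>beta_set la. b) = (\<Prod>i<length la. (\<lambda>b. b) (la!i + length la - 1 - i))"
    unfolding beta_set_def by (rule prod.reindex_cong[OF beta_set_inj[OF assms] refl refl])
  then show ?thesis by simp
qed

lemma image_diff_atLeastLessThan_nat:
  fixes c :: nat
  assumes "a \<le> c" "b \<le> Suc c"
  shows "(\<lambda>i. c - i) ` {a..<b} = {Suc c - b..c - a}"
proof
  show "{Suc c - b..c - a} \<subseteq> (\<lambda>i. c - i) ` {a..<b}"
  proof
    fix t assume "t \<in> {Suc c - b..c - a}"
    then have "c - t \<in> {a..<b}" "t = c - (c - t)" using assms by auto
    then show "t \<in> (\<lambda>i. c - i) ` {a..<b}" by (rule rev_image_eqI)
  qed
qed (use assms in auto)

lemma beta_set_drop_first_col: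
  assumes "is_partition la"
  defines "s \<equiv> length la - length (drop_first_col la)"
  shows "beta_set la = Suc ` ((\<lambda>b. b + s) ` beta_set (drop_first_col la) \<union> {..<s})"
proof -
  let ?L = "length la" and ?L' = "length (drop_first_col la)"
  have LL: "?L' \<le> ?L" by (rule length_drop_first_col_le)
  have A: "beta_set la = (\<lambda>i. la!i + ?L - 1 - i) ` {..<?L'} \<union> (\<lambda>i. la!i + ?L - 1 - i) ` {?L'..<?L}"
  proof -
    have "{..<?L} = {..<?L'} \<union> {?L'..<?L}" using LL by auto
    then show ?thesis unfolding beta_set_def by (simp only: image_Un)
  qed
  have B: "(\<lambda>i. la!i + ?L - 1 - i) ` {..<?L'} = Suc ` (\<lambda>b. b + s) ` beta_set (drop_first_col la)"
  proof -
    have "(\<lambda>i. la!i + ?L - 1 - i) ` {..<?L'} =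
        (\<lambda>i. Suc (drop_first_col la ! i + ?L' - 1 - i + s)) ` {..<?L'}"
    proof (rule image_cong[OF refl])
      fix i assume i: "i \<in> {..<?L'}"
      then have "i < ?L" using LL by simp
      then have "1 < la!i" using less_length_drop_first_col_iff[OF assms(1)] i by simp
      then show "la!i + ?L - 1 - i = Suc (drop_first_col la ! i + ?L' - 1 - i + s)"
        using drop_first_col_nth[of i la] i LL unfolding s_def by simp
    qed
    also have "\<dots> = Suc ` (\<lambda>b. b + s) ` beta_set (drop_first_col la)" unfolding beta_set_def
      by (simp add: image_image)
    finally show ?thesis .
  qed
  have C: "(\<lambda>i. la!i + ?L - 1 - i) ` {?L'..<?L} = Suc ` {..<s}"
  proof -
    have "(\<lambda>i. la!i + ?L - 1 - i) ` {?L'..<?L} = (\<lambda>i. ?L - i) ` {?L'..<?L}"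
    proof (rule image_cong[OF refl])
      fix i assume i: "i \<in> {?L'..<?L}"
      then have "\<not> 1 < la!i" using less_length_drop_first_col_iff[OF assms(1), of i] by simp
      moreover have "0 < la!i" using partition_nth_pos[OF assms(1)] i by simp
      ultimately show "la!i + ?L - 1 - i = ?L - i" by simp
    qed
    also have "\<dots> = Suc ` {..<s}"
      using LL by (simp add: image_diff_atLeastLessThan_nat image_Suc_lessThan s_def)
    finally show ?thesis .
  qed
  show ?thesis unfolding A B C by (simp add: image_Un)
qed

text \<open>\<open>(\<lambda>b. b + s) ` B \<union> {..<s}\<close> is the beta-set \<open>B\<close> recomputed after appending \<open>s\<close> zero
  parts to the partition; the ratio of \<open>fact_prod_set\<close> and \<open>diff_prod\<close> does not see this.\<close>

lemma fact_prod_diff_prod_pad1: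
  assumes "finite C"
  shows "fact_prod_set (insert 0 (Suc ` C)) * diff_prod C =
      fact_prod_set C * diff_prod (insert 0 (Suc ` C))"
proof -
  have inj: "inj_on Suc C" by simp
  have n0: "0 \<notin> Suc ` C" by auto
  have "fact_prod_set (insert 0 (Suc ` C)) = (\<Prod>c\<in>C. Suc c) * fact_prod_set C"
    using assms n0 by (simp add: fact_prod_set_insert fact_prod_set_def prod.reindex[OF inj] prod.distrib[symmetric])
  moreover have "diff_prod (insert 0 (Suc ` C)) = diff_prod C * (\<Prod>c\<in>C. Suc c)"
  proof -
    have "Suc ` C = (+) 1 ` C" by auto
    then have "diff_prod (Suc ` C) = diff_prod C" using diff_prod_translate by metis
    then show ?thesis using assms n0
      by (simp add: diff_prod_insert prod.reindex[OF inj] absdiff_def)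
  qed
  ultimately show ?thesis by simp
qed

lemma fact_prod_diff_prod_pad:
  assumes "finite B"
  shows "fact_prod_set ((\<lambda>b. b + s) ` B \<union> {..<s}) * diff_prod B =
         fact_prod_set B * diff_prod ((\<lambda>b. b + s) ` B \<union> {..<s})"
proof (induction s)
  case (Suc s)
  let ?C = "(\<lambda>b. b + s) ` B \<union> {..<s}"
  have eq: "(\<lambda>b. b + Suc s) ` B \<union> {..<Suc s} = insert 0 (Suc ` ?C)"
    by (simp add: lessThan_Suc_eq_insert_0 image_Un image_image)
  have "fact_prod_set (insert 0 (Suc ` ?C)) * diff_prod B * diff_prod ?C =
        fact_prod_set ?C * diff_prod B * diff_prod (insert 0 (Suc ` ?C))"
    using fact_prod_diff_prod_pad1[of ?C] assms by (simp add: ac_simps)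
  also have "\<dots> = fact_prod_set B * diff_prod (insert 0 (Suc ` ?C)) * diff_prod ?C"
    using Suc.IH by (simp add: ac_simps)
  finally show ?case unfolding eq using diff_prod_pos[of ?C] by simp
qed simp

text \<open>The hook lengths in the first column are the elements of \<open>beta_set la\<close>, and the
  beta-set of \<open>drop_first_col la\<close>, padded and shifted by one, is \<open>beta_set la\<close> again.\<close>

theorem hook_prod_beta_set:
  assumes "is_partition la"
  shows "hook_prod la * diff_prod (beta_set la) = fact_prod_set (beta_set la)"
  using assms
proof (induction "sum_list la" arbitrary: la rule: less_induct)
  case less
  show ?case
  proof (cases "la = []")
    case True
    then show ?thesis by (simp add: hook_prod_def diagram_def beta_set_def)
  next
    case False
    let ?c = "drop_first_col la"
    define s where "s = length la - length ?c"
    let ?C = "(\<lambda>b. b + s) ` beta_set ?c \<union> {..<s}"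
    have pc: "is_partition ?c" by (rule is_partition_drop_first_col[OF less.prems])
    have "sum_list ?c < sum_list la" using sum_list_drop_first_col[OF less.prems] False by simp
    then have IH: "hook_prod ?c * diff_prod (beta_set ?c) = fact_prod_set (beta_set ?c)"
      using less.hyps pc by blast
    have bl: "beta_set la = Suc ` ?C" unfolding s_def
      by (rule beta_set_drop_first_col[OF less.prems])
    have fC: "finite ?C" by (simp add: finite_beta_set)
    have injS: "inj_on Suc ?C" by simp
    have PFb: "fact_prod_set (beta_set la) = (\<Prod>b\<in>beta_set la. b) * fact_prod_set ?C"
      unfolding bl fact_prod_set_def prod.reindex[OF injS] by (simp add: prod.distrib[symmetric])
    have Dlb: "diff_prod (beta_set la) = diff_prod ?C"
    proof -
      have "Suc ` ?C = (+) 1 ` ?C" by auto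
      then show ?thesis unfolding bl by (metis diff_prod_translate)
    qed
    have HPl: "hook_prod la = (\<Prod>b\<in>beta_set la. b) * hook_prod ?c"
      using hook_prod_drop_first_col[OF less.prems] prod_beta_set[OF less.prems] by simp
    have SH: "fact_prod_set ?C * diff_prod (beta_set ?c) = fact_prod_set (beta_set ?c) * diff_prod ?C"
      by (rule fact_prod_diff_prod_pad[OF finite_beta_set])
    have "hook_prod la * diff_prod (beta_set la) * diff_prod (beta_set ?c) =
        fact_prod_set (beta_set la) * diff_prod (beta_set ?c)"
    proof -
      have "hook_prod la * diff_prod (beta_set la) * diff_prod (beta_set ?c) =
          (\<Prod>b\<in>beta_set la. b) * (hook_prod ?c * diff_prod (beta_set ?c)) * diff_prod ?C"
        using HPl Dlb by simp
      also have "\<dots> = (\<Prod>b\<in>beta_set la. b) * (fact_prod_set (beta_set ?c) * diff_prod ?C)" using IH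
        by simp
      also have "\<dots> = (\<Prod>b\<in>beta_set la. b) * (fact_prod_set ?C * diff_prod (beta_set ?c))" using SH
        by simp
      also have "\<dots> = fact_prod_set (beta_set la) * diff_prod (beta_set ?c)" using PFb by simp
      finally show ?thesis .
    qed
    then show ?thesis using diff_prod_pos[of "beta_set ?c"] by simp
  qed
qed

section \<open>Integrality of the hook length formula\<close>

definition root_poly :: "real set \<Rightarrow> (real \<Rightarrow> real) \<Rightarrow> real poly" where
  "root_poly S f = (\<Prod>u\<in>S. [:- f u, 1:])"

definition esym2 :: "real set \<Rightarrow> (real \<Rightarrow> real) \<Rightarrow> real" where
  "esym2 S f = ((\<Sum>u\<in>S. f u)^2 - (\<Sum>u\<in>S. (f u)^2)) / 2"

lemma degree_root_poly: "finite S \<Longrightarrow> degree (root_poly S f) = card S"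
  unfolding root_poly_def by (subst degree_prod_eq_sum_degree) auto

lemma coeff_root_poly_card: "finite S \<Longrightarrow> coeff (root_poly S f) (card S) = 1"
  using lead_coeff_prod[of "\<lambda>u. [:- f u, 1:]" S] degree_root_poly[of S f]
  by (simp add: root_poly_def)

lemma coeff_root_poly_above: "finite S \<Longrightarrow> card S < i \<Longrightarrow> coeff (root_poly S f) i = 0"
  using degree_root_poly[of S f] by (simp add: coeff_eq_0)

lemma coeff_linear_factor_mult_Suc:
  "coeff ([:-c, 1:] * P) (Suc m) = coeff P m - c * coeff P (Suc m)" for c :: real
  by (simp add: algebra_simps)

lemma esym2_insert:
  assumes "finite S" "a \<notin> S"
  shows "esym2 (insert a S) f = esym2 S f + f a * (\<Sum>u\<in>S. f u)"
  using assms by (simp add: esym2_def power2_eq_square field_simps)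

lemma coeff_root_poly_subleading:
  assumes "finite S"
  shows "(1 \<le> card S \<longrightarrow> coeff (root_poly S f) (card S - 1) = - (\<Sum>u\<in>S. f u)) \<and>
         (2 \<le> card S \<longrightarrow> coeff (root_poly S f) (card S - 2) = esym2 S f)"
  using assms
proof (induction S rule: finite_induct)
  case (insert a S)
  let ?P = "root_poly S f"
  have eq: "root_poly (insert a S) f = [:- f a, 1:] * ?P" using insert by (simp add: root_poly_def)
  have cS: "card (insert a S) = Suc (card S)" using insert by simp
  have c1: "coeff (root_poly (insert a S) f) (card (insert a S) - 1) = - (\<Sum>u\<in>insert a S. f u)"
  proof (cases "card S")
    case 0
    then have "S = {}" using insert.hyps(1) by simp
    then show ?thesis using insert by (simp add: root_poly_def)
  next
    case (Suc m)
    have "coeff (root_poly (insert a S) f) (card (insert a S) - 1) = coeff ?P m - f a * coeff ?P (Suc m)"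
      unfolding eq cS Suc by (simp add: coeff_linear_factor_mult_Suc)
    also have "\<dots> = - (\<Sum>u\<in>S. f u) - f a"
      using insert.IH coeff_root_poly_card[OF insert.hyps(1)] Suc by simp
    finally show ?thesis using insert by simp
  qed
  have c2: "coeff (root_poly (insert a S) f) (card (insert a S) - 2) = esym2 (insert a S) f"
    if "2 \<le> card (insert a S)"
  proof (cases "card S")
    case (Suc m)
    show ?thesis
    proof (cases m)
      case 0
      then obtain s where "S = {s}" using Suc card_1_singletonE by auto
      then show ?thesis using insert
        by (simp add: root_poly_def esym2_def power2_eq_square algebra_simps)
    next
      case (Suc m')
      have "coeff (root_poly (insert a S) f) (card (insert a S) - 2) =
          coeff ?P m' - f a * coeff ?P (Suc m')"
        unfolding eq cS using \<open>card S = Suc m\<close> Suc by (simp add: coeff_linear_factor_mult_Suc)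
      also have "\<dots> = esym2 S f + f a * (\<Sum>u\<in>S. f u)"
        using insert.IH \<open>card S = Suc m\<close> Suc by simp
      finally show ?thesis using esym2_insert[OF insert.hyps] by simp
    qed
  qed (use that cS in simp)
  show ?case using c1 c2 by blast
qed simp

definition shift_weight :: "real set \<Rightarrow> real \<Rightarrow> real" where
  "shift_weight B b = (\<Prod>u\<in>B-{b}. (b - 1 - u) / (b - u))"

text \<open>Lagrange interpolation of \<open>\<Prod>u\<in>B. X - u\<close> minus \<open>\<Prod>u\<in>B. X - 1 - u\<close>, a polynomial of
  degree less than \<open>card B\<close>, at the nodes \<open>B\<close>.\<close>

lemma shift_weight_interpolation:
  assumes "finite B"
  shows "(\<Sum>b\<in>B. smult (shift_weight B b) (root_poly (B-{b}) id)) =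
         root_poly B id - root_poly B (\<lambda>u. u + 1)"
    (is "?P = ?Q")
proof (cases "B = {}")
  case False
  let ?L = "card B"
  have L: "1 \<le> ?L" using assms False by (simp add: Suc_le_eq card_gt_0_iff)
  have nodes: "poly ?P c = poly ?Q c" if c: "c \<in> B" for c
  proof -
    have "poly ?P c = (\<Sum>b\<in>B. shift_weight B b * (\<Prod>u\<in>B-{b}. c - u))"
      by (simp add: poly_sum root_poly_def poly_prod)
    also have "\<dots> = shift_weight B c * (\<Prod>u\<in>B-{c}. c - u)"
    proof (rule sum.remove[OF assms c, THEN trans])
      have "(\<Prod>u\<in>B-{b}. c - u) = 0" if "b \<in> B - {c}" for b
        using that c assms by (intro prod_zero) auto
      then show "shift_weight B c * (\<Prod>u\<in>B - {c}. c - u) +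
          (\<Sum>b\<in>B - {c}. shift_weight B b * (\<Prod>u\<in>B - {b}. c - u)) =
          shift_weight B c * (\<Prod>u\<in>B - {c}. c - u)" by simp
    qed
    also have "\<dots> = (\<Prod>u\<in>B-{c}. c - 1 - u)"
      unfolding shift_weight_def prod.distrib[symmetric] by (rule prod.cong) auto
    finally have t1: "poly ?P c = (\<Prod>u\<in>B-{c}. c - 1 - u)" .
    have t2: "poly (root_poly B id) c = 0" using c assms by (simp add: root_poly_def poly_prod)
    have "poly (root_poly B (\<lambda>u. u + 1)) c = (\<Prod>u\<in>B. c - (u + 1))"
      by (auto simp: root_poly_def poly_prod intro!: prod.cong)
    also have "\<dots> = (c - (c+1)) * (\<Prod>u\<in>B-{c}. c - (u + 1))" by (rule prod.remove[OF assms c])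
    finally have t3: "poly (root_poly B (\<lambda>u. u + 1)) c = - (\<Prod>u\<in>B-{c}. c - 1 - u)"
      by (simp add: algebra_simps)
    show ?thesis using t1 t2 t3 by simp
  qed
  have "degree ?P \<le> ?L - 1"
    using assms by (intro degree_sum_le order.trans[OF degree_smult_le]) (auto simp: degree_root_poly)
  moreover have "degree ?Q \<le> ?L - 1"
  proof (rule degree_le, intro allI impI)
    fix i assume "?L - 1 < i"
    then have "i = ?L \<or> ?L < i" using L by linarith
    then show "coeff ?Q i = 0" using coeff_root_poly_card coeff_root_poly_above assms by auto
  qed
  ultimately show ?thesis by (intro poly_eqI_degree[OF nodes]) (use L in auto)
qed (simp add: root_poly_def)

lemma sum_shift_weight:
  assumes "finite B" "B \<noteq> {}"
  shows "(\<Sum>b\<in>B. shift_weight B b) = real (card B)"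
proof -
  let ?L = "card B"
  have L: "1 \<le> ?L" using assms by (simp add: Suc_le_eq card_gt_0_iff)
  have "coeff (\<Sum>b\<in>B. smult (shift_weight B b) (root_poly (B-{b}) id)) (?L - 1) =
        coeff (root_poly B id - root_poly B (\<lambda>u. u + 1)) (?L - 1)"
    by (simp only: shift_weight_interpolation[OF assms(1)])
  moreover have "coeff (root_poly (B-{b}) id) (?L - 1) = 1" if "b \<in> B" for b
    using coeff_root_poly_card[of "B-{b}" id] assms(1) that by simp
  moreover have "coeff (root_poly B f) (?L - 1) = - (\<Sum>u\<in>B. f u)" for f
    using coeff_root_poly_subleading[OF assms(1), of f] L by simp
  ultimately have "(\<Sum>b\<in>B. shift_weight B b) = (\<Sum>u\<in>B. u + 1) - (\<Sum>u\<in>B. u)"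
    by (simp add: coeff_sum)
  then show ?thesis using assms by (simp add: sum.distrib)
qed

lemma real_sum_lessThan: "real (\<Sum>i<L. i) = real L * (real L - 1) / 2"
  by (induction L) (simp_all add: field_simps)

lemma partial_fraction_identity:
  assumes "finite B"
  shows "(\<Sum>b\<in>B. b * shift_weight B b) = (\<Sum>b\<in>B. b) - real (card B) * (real (card B) - 1) / 2"
proof (cases "card B \<ge> 2")
  case False
  then consider "card B = 0" | "card B = 1" by linarith
  then show ?thesis
  proof cases
    case 1 then have "B = {}" using assms by simp
    then show ?thesis by simp
  next
    case 2 then obtain b where "B = {b}" using card_1_singletonE by blast
    then show ?thesis by (simp add: shift_weight_def)
  qed
next
  case True
  let ?L = "card B" and ?A = "shift_weight B"
  have ne: "B \<noteq> {}" using True by auto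
  have "coeff (\<Sum>b\<in>B. smult (?A b) (root_poly (B-{b}) id)) (?L - 2) =
        coeff (root_poly B id - root_poly B (\<lambda>u. u + 1)) (?L - 2)"
    by (simp only: shift_weight_interpolation[OF assms])
  moreover have "coeff (root_poly (B-{b}) id) (?L - 2) = b - (\<Sum>u\<in>B. u)" if "b \<in> B" for b
  proof -
    have "coeff (root_poly (B-{b}) id) (?L - 2) = - (\<Sum>u\<in>B-{b}. u)"
      using coeff_root_poly_subleading[of "B-{b}" id] assms that True by (simp add: numeral_2_eq_2)
    also have "(\<Sum>u\<in>B-{b}. u) = (\<Sum>u\<in>B. u) - b" using sum_diff1[OF assms, of id b] that by simp
    finally show ?thesis by (simp add: id_def)
  qed
  moreover have "coeff (root_poly B f) (?L - 2) = esym2 B f" for f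
    using coeff_root_poly_subleading[OF assms, of f] True by simp
  ultimately have eq: "(\<Sum>b\<in>B. ?A b * (b - (\<Sum>u\<in>B. u))) = esym2 B id - esym2 B (\<lambda>u. u + 1)"
    by (simp add: coeff_sum)
  have "esym2 B (\<lambda>u. u + 1) - esym2 B id = (\<Sum>u\<in>B. u) * (real ?L - 1) + real ?L * (real ?L - 1) / 2"
  proof -
    have s1: "(\<Sum>u\<in>B. u + 1) = (\<Sum>u\<in>B. u) + real ?L" using assms by (simp add: sum.distrib)
    have s2: "(\<Sum>u\<in>B. (u + 1)^2) = (\<Sum>u\<in>B. u^2) + 2 * (\<Sum>u\<in>B. u) + real ?L"
      using assms by (simp add: power2_eq_square algebra_simps sum.distrib sum_distrib_left)
    show ?thesis unfolding esym2_def s1 s2 by (simp add: power2_eq_square field_simps)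
  qed
  moreover have "(\<Sum>b\<in>B. ?A b * (b - (\<Sum>u\<in>B. u))) = (\<Sum>b\<in>B. b * ?A b) - (\<Sum>u\<in>B. u) * real ?L"
    using sum_shift_weight[OF assms ne]
    by (simp add: algebra_simps sum_subtractf sum_distrib_left[symmetric] sum_distrib_right[symmetric])
  ultimately show ?thesis using eq by (simp add: algebra_simps)
qed

lemma sum_distinct_ge_triangle:
  "finite B \<Longrightarrow> card B = n \<Longrightarrow> (\<Sum>i<n. i) \<le> (\<Sum>b\<in>B. b) \<and> ((\<Sum>b\<in>B. b) = (\<Sum>i<n. i) \<longrightarrow> B = {..<n})"
proof (induction n arbitrary: B)
  case 0
  then have "B = {}" by simp
  then show ?case by simp
next
  case (Suc n)
  have ne: "B \<noteq> {}" using Suc.prems by auto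
  define m where "m = Max B"
  have mB: "m \<in> B" unfolding m_def using Suc.prems ne by simp
  have le: "b \<le> m" if "b \<in> B" for b unfolding m_def using Suc.prems that by simp
  have "B \<subseteq> {..m}" using le by auto
  then have "card B \<le> card {..m}" by (rule card_mono[rotated]) simp
  then have nm: "n \<le> m" using Suc.prems by simp
  have fB': "finite (B - {m})" using Suc.prems by simp
  have cB': "card (B - {m}) = n" using Suc.prems mB by simp
  have IH1: "(\<Sum>i<n. i) \<le> (\<Sum>b\<in>B-{m}. b)" using Suc.IH[OF fB' cB'] by blast
  have IH2: "(\<Sum>b\<in>B-{m}. b) = (\<Sum>i<n. i) \<Longrightarrow> B - {m} = {..<n}" using Suc.IH[OF fB' cB'] by blast
  have sB: "(\<Sum>b\<in>B. b) = m + (\<Sum>b\<in>B-{m}. b)" using sum.remove[OF Suc.prems(1) mB] by simp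
  have sS: "(\<Sum>i<Suc n. i) = n + (\<Sum>i<n. i)" by simp
  have t1: "(\<Sum>i<Suc n. i) \<le> (\<Sum>b\<in>B. b)" using IH1 nm sB sS by linarith
  moreover have "B = {..<Suc n}" if eq: "(\<Sum>b\<in>B. b) = (\<Sum>i<Suc n. i)"
  proof -
    have mn: "m = n" using eq IH1 nm sB sS by linarith
    have "(\<Sum>b\<in>B-{m}. b) = (\<Sum>i<n. i)" using eq IH1 nm sB sS by linarith
    then have "B - {m} = {..<n}" by (rule IH2)
    then have "B = insert m {..<n}" using mB by blast
    then show ?thesis using mn by (simp add: lessThan_Suc)
  qed
  ultimately show ?case by blast
qed

lemma absdiff_pred_ratio:
  assumes "v \<noteq> b" "v \<noteq> b - 1" "0 < b"
  shows "real (absdiff (b-1) v) = real (absdiff b v) * ((real b - 1 - real v) / (real b - real v))"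
proof (cases "v < b")
  case True
  then have "v < b - 1" using assms by simp
  then have 1: "real (absdiff (b-1) v) = real b - 1 - real v" by (simp add: absdiff_def of_nat_diff)
  have 2: "real (absdiff b v) = real b - real v" using True by (simp add: absdiff_def of_nat_diff)
  have "real b - real v \<noteq> 0" using True by simp
  then show ?thesis unfolding 1 2 by simp
next
  case False
  then have bv: "b < v" using assms by simp
  then have "absdiff (b-1) v = v - b + 1" using assms(3) by (auto simp: absdiff_def Suc_diff_le)
  then have 1: "real (absdiff (b-1) v) = real v - real b + 1" using bv by (simp add: of_nat_diff)
  have 2: "real (absdiff b v) = real v - real b" using bv by (simp add: absdiff_def of_nat_diff)
  have ne: "real v - real b \<noteq> 0" using bv by simp
  have ne2: "real b - real v \<noteq> 0" using bv by simp
  have "(real b - 1 - real v) / (real b - real v) = (real v - real b + 1) / (real v - real b)"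
    by (subst frac_eq_eq[OF ne2 ne]) (simp add: algebra_simps)
  then show ?thesis unfolding 1 2 using ne by simp
qed

lemma shift_weight_real_image:
  assumes "finite B" "b \<in> B"
  shows "shift_weight (real ` B) (real b) = (\<Prod>v\<in>B-{b}. (real b - 1 - real v) / (real b - real v))"
proof -
  have "real ` B - {real b} = real ` (B - {b})" by auto
  then show ?thesis unfolding shift_weight_def by (simp add: prod.reindex inj_on_def)
qed

lemma shift_weight_vanishes:
  assumes "finite B" "b \<in> B" "0 < b" "b - 1 \<in> B"
  shows "shift_weight (real ` B) (real b) = 0"
  unfolding shift_weight_real_image[OF assms(1,2)]
  by (rule prod_zero) (use assms in \<open>auto intro!: bexI[of _ "b - 1"] simp: of_nat_diff\<close>)

lemma diff_prod_lower_entry: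
  assumes "finite B" "b \<in> B" "0 < b" "b - 1 \<notin> B"
  shows "real (diff_prod (insert (b - 1) (B - {b}))) =
      shift_weight (real ` B) (real b) * real (diff_prod B)"
proof -
  have f: "finite (B - {b})" using assms(1) by simp
  have "diff_prod B = diff_prod (insert b (B - {b}))" using assms(2) by (simp add: insert_absorb)
  also have "\<dots> = diff_prod (B - {b}) * (\<Prod>v\<in>B-{b}. absdiff b v)"
    by (rule diff_prod_insert[OF f]) simp
  finally have D1: "diff_prod B = diff_prod (B - {b}) * (\<Prod>v\<in>B-{b}. absdiff b v)" .
  have D2: "diff_prod (insert (b - 1) (B - {b})) = diff_prod (B - {b}) * (\<Prod>v\<in>B-{b}. absdiff (b-1) v)"
    by (rule diff_prod_insert[OF f]) (use assms in auto)
  have "real (\<Prod>v\<in>B-{b}. absdiff (b-1) v) =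
        (\<Prod>v\<in>B-{b}. real (absdiff b v) * ((real b - 1 - real v) / (real b - real v)))"
    unfolding of_nat_prod by (rule prod.cong[OF refl], rule absdiff_pred_ratio) (use assms in auto)
  also have "\<dots> = real (\<Prod>v\<in>B-{b}. absdiff b v) * shift_weight (real ` B) (real b)"
    unfolding shift_weight_real_image[OF assms(1,2)] of_nat_prod by (rule prod.distrib)
  finally show ?thesis unfolding D2 using D1 by simp
qed

text \<open>In terms of partitions: \<open>f\<^sup>\<lambda>\<close> is the sum of \<open>f\<^sup>\<mu>\<close> over the \<open>\<mu>\<close> obtained by removing
  one box, written for the beta-set \<open>B\<close> of \<open>\<lambda>\<close>, where removing a box lowers one \<open>b \<in> B\<close> by one.\<close>

lemma diff_prod_branching:
  assumes fB: "finite B"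
  defines "G \<equiv> {b\<in>B. 0 < b \<and> b - 1 \<notin> B}"
  shows "((\<Sum>b\<in>B. b) - (\<Sum>i<card B. i)) * diff_prod B = (\<Sum>b\<in>G. b * diff_prod (insert (b - 1) (B - {b})))"
proof -
  let ?A = "\<lambda>b. shift_weight (real ` B) (real b)"
  have inj: "inj_on real B" by (rule inj_onI) simp
  have "real ((\<Sum>b\<in>B. b) - (\<Sum>i<card B. i)) = real (\<Sum>b\<in>B. b) - real (card B) * (real (card B) - 1) / 2"
    using sum_distinct_ge_triangle[OF fB refl] real_sum_lessThan[of "card B"]
      by (simp add: of_nat_diff)
  also have "\<dots> = (\<Sum>b\<in>B. real b * ?A b)"
    using partial_fraction_identity[of "real ` B"] fB
      by (simp add: sum.reindex[OF inj] card_image[OF inj])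
  also have "\<dots> = (\<Sum>b\<in>G. real b * ?A b)"
    by (rule sum.mono_neutral_right[OF fB]) (auto simp: G_def shift_weight_vanishes[OF fB])
  finally have "real (((\<Sum>b\<in>B. b) - (\<Sum>i<card B. i)) * diff_prod B) =
                (\<Sum>b\<in>G. real b * (?A b * real (diff_prod B)))"
    by (simp add: sum_distrib_right mult.assoc)
  also have "\<dots> = (\<Sum>b\<in>G. real (b * diff_prod (insert (b - 1) (B - {b}))))"
  proof (rule sum.cong[OF refl])
    fix b assume "b \<in> G"
    then show "real b * (?A b * real (diff_prod B)) = real (b * diff_prod (insert (b - 1) (B - {b})))"
      unfolding G_def using diff_prod_lower_entry[OF fB, of b] by simp
  qed
  finally show ?thesis by (simp only: of_nat_eq_iff of_nat_sum[symmetric])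
qed

lemma prod_lessThan_diff_eq_fact: "(\<Prod>v<u. u - v) = fact u"
proof (induction u)
  case 0 then show ?case by simp
next
  case (Suc u)
  have "(\<Prod>v<Suc u. Suc u - v) = (Suc u - 0) * (\<Prod>v<u. Suc u - Suc v)"
    by (rule prod.lessThan_Suc_shift)
  also have "(\<Prod>v<u. Suc u - Suc v) = (\<Prod>v<u. u - v)" by simp
  finally show ?case using Suc.IH by simp
qed

lemma diff_prod_lessThan: "diff_prod {..<L} = fact_prod_set {..<L}"
  unfolding diff_prod_def fact_prod_set_def
proof (rule prod.cong[OF refl])
  fix u assume "u \<in> {..<L}"
  then have "{v \<in> {..<L}. v < u} = {..<u}" by auto
  then show "(\<Prod>v\<in>{v \<in> {..<L}. v < u}. u - v) = fact u" using prod_lessThan_diff_eq_fact by simp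
qed

lemma lower_entry:
  assumes "finite B" "b \<in> B" "0 < b" "b - 1 \<notin> B"
  defines "B' \<equiv> insert (b - 1) (B - {b})"
  shows "finite B'" "card B' = card B" "(\<Sum>x\<in>B'. x) = (\<Sum>x\<in>B. x) - 1"
    and "fact_prod_set B = b * fact_prod_set B'"
proof -
  have f: "finite (B - {b})" and nb: "b - 1 \<notin> B - {b}" using assms by auto
  show "finite B'" using f unfolding B'_def by simp
  have "0 < card B" using assms(1,2) card_gt_0_iff by blast
  then show "card B' = card B" using f nb assms(1,2) unfolding B'_def by simp
  have "(\<Sum>x\<in>B'. x) = (b - 1) + (\<Sum>x\<in>B-{b}. x)" using f nb unfolding B'_def by simp
  moreover have "(\<Sum>x\<in>B. x) = b + (\<Sum>x\<in>B-{b}. x)" using sum.remove[OF assms(1,2)] by simp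
  ultimately show "(\<Sum>x\<in>B'. x) = (\<Sum>x\<in>B. x) - 1" using assms(3) by simp
  have "fact_prod_set B = fact b * fact_prod_set (B - {b})"
    using fact_prod_set_insert[OF f, of b] assms(2) by (simp add: insert_absorb)
  moreover have "fact_prod_set B' = fact (b - 1) * fact_prod_set (B - {b})"
    unfolding B'_def using fact_prod_set_insert[OF f nb] .
  moreover have "fact b = b * fact (b - 1)" using assms(3) by (simp add: fact_reduce)
  ultimately show "fact_prod_set B = b * fact_prod_set B'" by simp
qed

theorem fact_prod_set_dvd:
  assumes "finite B"
  shows "fact_prod_set B dvd fact ((\<Sum>b\<in>B. b) - (\<Sum>i<card B. i)) * diff_prod B"
  using assms
proof (induction "\<Sum>b\<in>B. b" arbitrary: B rule: less_induct)
  case less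
  define n where "n = (\<Sum>b\<in>B. b) - (\<Sum>i<card B. i)"
  show ?case
  proof (cases "n = 0")
    case True
    then have "B = {..<card B}" using sum_distinct_ge_triangle[OF less.prems refl] unfolding n_def
      by simp
    then have "diff_prod B = fact_prod_set B" using diff_prod_lessThan by metis
    then show ?thesis using True unfolding n_def by simp
  next
    case False
    define G where "G = {b\<in>B. 0 < b \<and> b - 1 \<notin> B}"
    have "fact n * diff_prod B = fact (n - 1) * (n * diff_prod B)"
      using False by (simp add: fact_reduce)
    also have "n * diff_prod B = (\<Sum>b\<in>G. b * diff_prod (insert (b - 1) (B - {b})))"
      unfolding n_def G_def by (rule diff_prod_branching[OF less.prems])
    finally have eq: "fact n * diff_prod B =
        (\<Sum>b\<in>G. b * (fact (n - 1) * diff_prod (insert (b - 1) (B - {b}))))"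
      by (simp add: sum_distrib_left algebra_simps)
    have "fact_prod_set B dvd b * (fact (n - 1) * diff_prod (insert (b - 1) (B - {b})))" if "b \<in> G" for b
    proof -
      let ?B' = "insert (b - 1) (B - {b})"
      have b: "b \<in> B" "0 < b" "b - 1 \<notin> B" using that unfolding G_def by auto
      note B' = lower_entry[OF less.prems b]
      have "(\<Sum>x\<in>?B'. x) < (\<Sum>x\<in>B. x)" using B'(3) False unfolding n_def by simp
      then have "fact_prod_set ?B' dvd fact ((\<Sum>x\<in>?B'. x) - (\<Sum>i<card ?B'. i)) * diff_prod ?B'"
        using less.hyps B'(1) by blast
      also have "(\<Sum>x\<in>?B'. x) - (\<Sum>i<card ?B'. i) = n - 1" unfolding B'(2,3) n_def by simp
      finally show ?thesis unfolding B'(4) by simp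
    qed
    then have "fact_prod_set B dvd fact n * diff_prod B" unfolding eq by (intro dvd_sum) auto
    then show ?thesis unfolding n_def .
  qed
qed

lemma sum_beta_set:
  assumes "is_partition la"
  shows "(\<Sum>b\<in>beta_set la. b) = sum_list la + (\<Sum>i<length la. i)"
proof -
  let ?L = "length la"
  have "(\<Sum>b\<in>beta_set la. b) = (\<Sum>i<?L. la!i + ?L - 1 - i)"
    unfolding beta_set_def by (rule sum.reindex_cong[OF beta_set_inj[OF assms] refl]) simp
  also have "\<dots> = (\<Sum>i<?L. la!i) + (\<Sum>i<?L. ?L - 1 - i)"
    unfolding sum.distrib[symmetric] by (rule sum.cong) auto
  also have "(\<Sum>i<?L. ?L - 1 - i) = (\<Sum>i<?L. i)"
    using sum.nat_diff_reindex[of "\<lambda>i. i" ?L] by simp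
  also have "(\<Sum>i<?L. la!i) = sum_list la" by (simp add: sum_list_sum_nth atLeast0LessThan)
  finally show ?thesis .
qed

lemma card_beta_set: assumes "is_partition la" shows "card (beta_set la) = length la"
  unfolding beta_set_def by (subst card_image[OF beta_set_inj[OF assms]]) simp

theorem hook_prod_dvd_fact:
  assumes "is_partition la"
  shows "hook_prod la dvd fact (sum_list la)"
proof -
  have "fact_prod_set (beta_set la) dvd fact (sum_list la) * diff_prod (beta_set la)"
    using fact_prod_set_dvd[OF finite_beta_set[of la]] sum_beta_set[OF assms] card_beta_set[OF assms]
      by simp
  then have "hook_prod la * diff_prod (beta_set la) dvd fact (sum_list la) * diff_prod (beta_set la)"
    using hook_prod_beta_set[OF assms] by simp
  then show ?thesis using diff_prod_pos[of "beta_set la"] by simp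
qed

lemma char_degree_mult_hook_prod:
  assumes "is_partition la"
  shows "char_degree la * hook_prod la = fact (sum_list la)"
  using hook_prod_dvd_fact[OF assms] unfolding char_degree_def hook_prod_def[symmetric] by simp

section \<open>Star shapes\<close>

lemma star_eq:
  assumes "is_partition gm" "gm \<noteq> []"
  shows "star gm x y = (gm!0 + x) # tl gm @ replicate y 1"
proof -
  have "0 \<notin> set gm" using assms(1) by (simp add: is_partition_def)
  then have "0 \<notin> set (tl gm)" by (meson list.set_sel(2) assms(2))
  then have "filter (\<lambda>t. t \<noteq> 0) (tl gm) = tl gm" unfolding filter_id_conv by (metis neq0_conv)
  moreover have "0 < gm!0" using partition_nth_pos[OF assms(1)] assms(2) by simp
  moreover have "first_part gm = gm!0" using assms(2) by (simp add: first_part_def hd_conv_nth)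
  ultimately show ?thesis by (simp add: star_def)
qed

lemma star_nil: "0 < x \<Longrightarrow> star [] x y = star [1] (x - 1) y"
  by (simp add: star_def first_part_def)

lemma star_length:
  assumes "is_partition gm" "gm \<noteq> []"
  shows "length (star gm x y) = length gm + y"
  using assms by (simp add: star_eq)

lemma star_nth:
  assumes "is_partition gm" "gm \<noteq> []" "i < length gm + y"
  shows "star gm x y ! i = (if i = 0 then gm!0 + x else if i < length gm then gm!i else 1)"
proof -
  obtain g gs where gm: "gm = g # gs" using assms(2) by (cases gm) auto
  show ?thesis
  proof (cases i)
    case 0 then show ?thesis using assms by (simp add: star_eq)
  next
    case (Suc j)
    then show ?thesis using assms gm by (simp add: star_eq nth_append)
  qed
qed

lemma star_pos:
  assumes "is_partition gm" "gm \<noteq> []" "i < length gm + y"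
  shows "0 < star gm x y ! i"
proof -
  have l0: "0 < length gm" using assms(2) by simp
  show ?thesis
  proof (cases "i = 0")
    case True then show ?thesis unfolding star_nth[OF assms] using partition_nth_pos[OF assms(1) l0]
      by simp
  next
    case False
    then show ?thesis unfolding star_nth[OF assms] using partition_nth_pos[OF assms(1), of i]
      by simp
  qed
qed

lemma star_partition:
  assumes "is_partition gm" "gm \<noteq> []"
  shows "is_partition (star gm x y)"
proof -
  have "star gm x y ! j \<le> star gm x y ! i" if "i \<le> j" "j < length gm + y" for i j
    using that partition_nth_mono[OF assms(1), of i j] partition_nth_mono[OF assms(1), of 0 j]
      partition_nth_pos[OF assms(1), of i] assms(2)
    by (auto simp: star_nth[OF assms])
  then show ?thesis
    unfolding is_partition_iff star_length[OF assms] using star_pos[OF assms] by auto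
qed

lemma star_sum:
  assumes "is_partition gm" "gm \<noteq> []"
  shows "sum_list (star gm x y) = sum_list gm + x + y"
  using assms by (simp add: star_eq sum_list_replicate) (cases gm; simp)

lemma star_diagram:
  assumes "is_partition gm" "gm \<noteq> []"
  shows "diagram (star gm x y) = diagram gm \<union> {(0,j) | j. gm!0 \<le> j \<and> j < gm!0 + x}
           \<union> {(i,0) | i. length gm \<le> i \<and> i < length gm + y}"
  using assms(2) partition_nth_mono[OF assms(1), of 0]
  by (auto simp: diagram_def star_length[OF assms] star_nth[OF assms] split: if_splits)

lemma star_first_part:
  assumes "is_partition gm" "gm \<noteq> []"
  shows "first_part (star gm x y) = gm!0 + x"
  using assms by (simp add: star_eq first_part_def)

lemma star_first_part_conj:
  assumes "is_partition gm" "gm \<noteq> []"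
  shows "first_part_conj (star gm x y) = length gm + y"
  unfolding first_part_conj_def conj_part_0_eq_length[OF star_partition[OF assms]] star_length[OF assms] ..

lemma star_nil_0: "star [] 0 y = replicate y 1"
  by (simp add: star_def first_part_def)

lemma first_part_conj_replicate: "first_part_conj (replicate y 1) = y"
proof -
  have "{i. i < length (replicate y (1::nat)) \<and> 0 < replicate y (1::nat) ! i} = {..<y}" by auto
  then show ?thesis unfolding first_part_conj_def conj_part_def by simp
qed

lemma first_part_replicate: "0 < y \<Longrightarrow> first_part (replicate y 1) = 1"
  by (simp add: first_part_def)

lemma first_part_star_nil: "0 < x \<Longrightarrow> first_part (star [] x y) = x"
  using star_first_part[OF is_partition_single, of "x - 1" y] star_nil[of x y] by simp

lemma first_part_conj_star_nil: "0 < x \<Longrightarrow> first_part_conj (star [] x y) = 1 + y"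
  using star_first_part_conj[OF is_partition_single, of "x - 1" y] star_nil[of x y] by simp

text \<open>\<open>beta_set gm\<close> splits into its largest element \<open>corner_hook gm\<close>, the hook length of the
  cell \<open>(0, 0)\<close>, and the remaining elements \<open>lower_betas gm\<close>.\<close>

definition corner_hook :: "nat list \<Rightarrow> nat" where
  "corner_hook gm = gm!0 + length gm - 1"

definition lower_betas :: "nat list \<Rightarrow> nat set" where
  "lower_betas gm = (\<lambda>i. gm!i + length gm - 1 - i) ` {1..<length gm}"

lemma finite_lower_betas: "finite (lower_betas gm)" by (simp add: lower_betas_def)

lemma lower_betas_bounds:
  assumes "is_partition gm" "gm \<noteq> []" "b \<in> lower_betas gm"
  shows "1 \<le> b" "b < corner_hook gm"
proof -
  obtain i where i: "1 \<le> i" "i < length gm" "b = gm!i + length gm - 1 - i" using assms(3)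
    by (auto simp: lower_betas_def)
  show "1 \<le> b" using i partition_nth_pos[OF assms(1) i(2)] by simp
  show "b < corner_hook gm" using i partition_nth_mono[OF assms(1), of 0 i]
    unfolding corner_hook_def by simp
qed

lemma lower_betas_inj:
  assumes "is_partition gm"
  shows "inj_on (\<lambda>i. gm!i + length gm - 1 - i) {1..<length gm}"
  using beta_set_inj[OF assms] by (rule inj_on_subset) auto

lemma card_lower_betas:
  assumes "is_partition gm"
  shows "card (lower_betas gm) = length gm - 1"
  unfolding lower_betas_def by (subst card_image[OF lower_betas_inj[OF assms]]) simp

lemma corner_hook_le_sum_list:
  assumes "is_partition gm" "gm \<noteq> []"
  shows "corner_hook gm \<le> sum_list gm"
proof -
  let ?l = "length gm"
  have l0: "0 < ?l" using assms(2) by simp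
  have "sum_list gm = (\<Sum>i<?l. gm!i)" by (simp add: sum_list_sum_nth atLeast0LessThan)
  also have "\<dots> = gm!0 + (\<Sum>i\<in>{1..<?l}. gm!i)"
    using l0 by (simp add: sum.atLeast_Suc_lessThan atLeast0LessThan[symmetric])
  finally have s: "sum_list gm = gm!0 + (\<Sum>i\<in>{1..<?l}. gm!i)" .
  have "(\<Sum>i\<in>{1..<?l}. (1::nat)) \<le> (\<Sum>i\<in>{1..<?l}. gm!i)"
    by (rule sum_mono) (use partition_nth_pos[OF assms(1)] in \<open>auto simp: Suc_le_eq\<close>)
  then show ?thesis using s l0 unfolding corner_hook_def by simp
qed

lemma length_le_corner_hook:
  assumes "is_partition gm" "gm \<noteq> []"
  shows "length gm \<le> corner_hook gm"
  using partition_nth_pos[OF assms(1), of 0] assms(2) unfolding corner_hook_def by simp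

lemma beta_set_star:
  assumes "is_partition gm" "gm \<noteq> []"
  shows "beta_set (star gm x y) = insert (corner_hook gm + x + y) ((\<lambda>b. b + y) ` lower_betas gm \<union> {1..y})"
proof -
  let ?s = "star gm x y" and ?l = "length gm"
  let ?f = "\<lambda>i. ?s!i + length ?s - 1 - i"
  have L: "length ?s = ?l + y" by (rule star_length[OF assms])
  have l0: "0 < ?l" using assms(2) by simp
  have split: "{..<?l + y} = insert 0 ({1..<?l} \<union> {?l..<?l+y})" using l0 by auto
  have "beta_set ?s = ?f ` insert 0 ({1..<?l} \<union> {?l..<?l+y})" unfolding beta_set_def L split ..
  also have "\<dots> = insert (?f 0) (?f ` {1..<?l} \<union> ?f ` {?l..<?l+y})" by (simp add: image_Un)
  also have "?f 0 = corner_hook gm + x + y"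
  proof -
    have "0 < ?l + y" using l0 by simp
    then have "?f 0 = gm!0 + x + (?l + y) - 1" using star_nth[OF assms] L by simp
    then show ?thesis using l0 unfolding corner_hook_def by linarith
  qed
  also have "?f ` {1..<?l} = (\<lambda>b. b + y) ` lower_betas gm"
  proof -
    have "?f ` {1..<?l} = (\<lambda>i. (gm!i + ?l - 1 - i) + y) ` {1..<?l}"
    proof (rule image_cong[OF refl])
      fix i assume i: "i \<in> {1..<?l}"
      then show "?f i = (gm!i + ?l - 1 - i) + y" using star_nth[OF assms, of i] L by simp
    qed
    then show ?thesis unfolding lower_betas_def by (simp add: image_image)
  qed
  also have "?f ` {?l..<?l+y} = {1..y}"
  proof -
    have "?f ` {?l..<?l+y} = (\<lambda>i. ?l + y - i) ` {?l..<?l+y}"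
    proof (rule image_cong[OF refl])
      fix i assume i: "i \<in> {?l..<?l+y}"
      then have "?l \<le> i" by simp
      then have "i \<noteq> 0" "\<not> i < ?l" using l0 by linarith+
      then show "?f i = ?l + y - i" using star_nth[OF assms, of i] L i by simp
    qed
    also have "\<dots> = {1..y}" by (simp add: image_diff_atLeastLessThan_nat)
    finally show ?thesis .
  qed
  finally show ?thesis .
qed

lemma diff_prod_insert_max:
  assumes "finite S" "\<forall>v\<in>S. v < a"
  shows "diff_prod (insert a S) = diff_prod S * (\<Prod>v\<in>S. a - v)"
proof -
  have "a \<notin> S" using assms(2) by auto
  then have "diff_prod (insert a S) = diff_prod S * (\<Prod>v\<in>S. absdiff a v)"
    by (rule diff_prod_insert[OF assms(1)])
  also have "(\<Prod>v\<in>S. absdiff a v) = (\<Prod>v\<in>S. a - v)" using assms(2)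
    by (intro prod.cong) (auto simp: absdiff_def)
  finally show ?thesis .
qed

lemma diff_prod_union:
  assumes "finite Y" "finite Z" "\<forall>u\<in>Y. \<forall>v\<in>Z. v < u"
  shows "diff_prod (Y \<union> Z) = diff_prod Y * diff_prod Z * (\<Prod>u\<in>Y. \<Prod>v\<in>Z. u - v)"
  using assms
proof (induction Y rule: finite_induct)
  case empty then show ?case by simp
next
  case (insert a Y)
  have aZ: "\<forall>v\<in>Z. v < a" using insert.prems by simp
  have aYZ: "a \<notin> Y \<union> Z" using insert.hyps aZ by auto
  have IH: "diff_prod (Y \<union> Z) = diff_prod Y * diff_prod Z * (\<Prod>u\<in>Y. \<Prod>v\<in>Z. u - v)" using insert
    by simp
  have dYZ: "Y \<inter> Z = {}" using insert.prems by auto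
  have "diff_prod (insert a Y \<union> Z) = diff_prod (insert a (Y \<union> Z))" by simp
  also have "\<dots> = diff_prod (Y \<union> Z) * (\<Prod>v\<in>Y \<union> Z. absdiff a v)"
    by (rule diff_prod_insert) (use insert.hyps insert.prems aYZ in auto)
  also have "(\<Prod>v\<in>Y \<union> Z. absdiff a v) = (\<Prod>v\<in>Y. absdiff a v) * (\<Prod>v\<in>Z. absdiff a v)"
    by (rule prod.union_disjoint) (use insert.hyps insert.prems dYZ in auto)
  also have "(\<Prod>v\<in>Z. absdiff a v) = (\<Prod>v\<in>Z. a - v)" using aZ
    by (intro prod.cong) (auto simp: absdiff_def)
  also have "diff_prod (insert a Y) = diff_prod Y * (\<Prod>v\<in>Y. absdiff a v)"
    by (rule diff_prod_insert[OF insert.hyps])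
  moreover have "(\<Prod>u\<in>insert a Y. \<Prod>v\<in>Z. u - v) = (\<Prod>v\<in>Z. a - v) * (\<Prod>u\<in>Y. \<Prod>v\<in>Z. u - v)"
    using insert.hyps by simp
  ultimately show ?case unfolding IH by (simp only: ac_simps)
qed

lemma prod_atLeast1_shift_fact:
  "1 \<le> c \<Longrightarrow> (\<Prod>t\<in>{1..y}. c + y - t) * fact (c - 1) = fact (c + y - 1)"
proof (induction y arbitrary: c)
  case 0 then show ?case by simp
next
  case (Suc y)
  have IH: "(\<Prod>t\<in>{1..y}. (c + 1) + y - t) * fact c = fact (c + y)"
    using Suc.IH[of "c+1"] by simp
  have "{1..Suc y} = insert (Suc y) {1..y}" by auto
  then have "(\<Prod>t\<in>{1..Suc y}. c + Suc y - t) = c * (\<Prod>t\<in>{1..y}. c + Suc y - t)" by simp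
  also have "(\<Prod>t\<in>{1..y}. c + Suc y - t) = (\<Prod>t\<in>{1..y}. (c + 1) + y - t)" by simp
  finally have A: "(\<Prod>t\<in>{1..Suc y}. c + Suc y - t) = c * (\<Prod>t\<in>{1..y}. (c + 1) + y - t)" .
  have cf: "c * fact (c - 1) = fact c" using Suc.prems by (simp add: fact_reduce[of c])
  have "(\<Prod>t\<in>{1..Suc y}. c + Suc y - t) * fact (c - 1) = (\<Prod>t\<in>{1..y}. (c + 1) + y - t) * (c * fact (c - 1))"
    unfolding A by (simp only: ac_simps)
  also have "\<dots> = fact (c + y)" unfolding cf using IH .
  finally show ?case by simp
qed

lemma diff_prod_atLeast1: "diff_prod {1..y} = fact_prod_set {..<y}"
proof -
  have "Suc ` {..<y} = (+) 1 ` {..<y}" by auto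
  then have "diff_prod {1..y} = diff_prod {..<y}" unfolding image_Suc_lessThan[symmetric]
    by (metis diff_prod_translate)
  then show ?thesis using diff_prod_lessThan by simp
qed

lemma fact_prod_set_atLeast1: "fact_prod_set {1..y} = fact_prod_set {..<y} * fact y"
proof -
  have "fact_prod_set {1..y} = (\<Prod>s<y. fact (Suc s))"
    unfolding image_Suc_lessThan[symmetric] fact_prod_set_def
    by (simp add: prod.reindex)
  also have "\<dots> = fact_prod_set {..<Suc y}" unfolding fact_prod_set_def
    by (subst prod.lessThan_Suc_shift) simp
  also have "\<dots> = fact_prod_set {..<y} * fact y" unfolding fact_prod_set_def by simp
  finally show ?thesis .
qed

lemma lower_betas_shift_below:
  assumes "is_partition gm" "gm \<noteq> []"
  shows "\<forall>u\<in>(\<lambda>c. c + y) ` lower_betas gm. \<forall>v\<in>{1..y}. v < u"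
    and "\<forall>v\<in>(\<lambda>c. c + y) ` lower_betas gm \<union> {1..y}. v < corner_hook gm + x + y"
proof -
  have "0 < length gm" using assms(2) by simp
  then have "0 < corner_hook gm" using length_le_corner_hook[OF assms] by linarith
  then show "\<forall>v\<in>(\<lambda>c. c + y) ` lower_betas gm \<union> {1..y}. v < corner_hook gm + x + y"
    using lower_betas_bounds(2)[OF assms] by fastforce
qed (use lower_betas_bounds(1)[OF assms] in fastforce)

lemma diff_prod_beta_set_star:
  assumes gm: "is_partition gm" "gm \<noteq> []"
  defines "b \<equiv> corner_hook gm" and "B \<equiv> lower_betas gm"
  shows "diff_prod (beta_set (star gm x y)) =
         diff_prod B * fact_prod_set {..<y} * (\<Prod>c\<in>B. \<Prod>t\<in>{1..y}. c + y - t) *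
         (\<Prod>c\<in>B. b - c + x) * (\<Prod>t\<in>{1..y}. b + x + y - t)"
proof -
  let ?Y = "(\<lambda>c. c + y) ` B"
  have fin: "finite ?Y" "finite {1..y}" unfolding B_def by (simp_all add: finite_lower_betas)
  note below = lower_betas_shift_below(1)[OF gm, of y, folded B_def]
    lower_betas_shift_below(2)[OF gm, where x=x and y=y, folded b_def B_def]
  have injy: "inj_on (\<lambda>c. c + y) B" by (rule inj_onI) simp
  have "diff_prod (beta_set (star gm x y)) = diff_prod (?Y \<union> {1..y}) * (\<Prod>v\<in>?Y \<union> {1..y}. b + x + y - v)"
    unfolding beta_set_star[OF gm] b_def[symmetric] B_def[symmetric]
    by (rule diff_prod_insert_max) (use fin below in auto)
  also have "diff_prod (?Y \<union> {1..y}) = diff_prod B * fact_prod_set {..<y} * (\<Prod>c\<in>B. \<Prod>t\<in>{1..y}. c + y - t)"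
    using diff_prod_union[OF fin below(1)] diff_prod_translate[of y B] diff_prod_atLeast1[of y]
    by (simp add: add.commute prod.reindex[OF injy])
  also have "(\<Prod>v\<in>?Y \<union> {1..y}. b + x + y - v) = (\<Prod>v\<in>?Y. b + x + y - v) * (\<Prod>t\<in>{1..y}. b + x + y - t)"
    by (rule prod.union_disjoint) (use fin below in auto)
  also have "(\<Prod>v\<in>?Y. b + x + y - v) = (\<Prod>c\<in>B. b - c + x)"
    unfolding prod.reindex[OF injy]
  proof (rule prod.cong[OF refl])
    fix c assume "c \<in> B"
    then have "c < b" using lower_betas_bounds(2)[OF gm] unfolding b_def B_def by blast
    then show "((\<lambda>v. b + x + y - v) \<circ> (\<lambda>c. c + y)) c = b - c + x" by simp
  qed
  finally show ?thesis by (simp only: ac_simps)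
qed

lemma fact_prod_set_beta_set_star:
  assumes gm: "is_partition gm" "gm \<noteq> []"
  defines "b \<equiv> corner_hook gm" and "B \<equiv> lower_betas gm"
  shows "fact_prod_set (beta_set (star gm x y)) =
         fact (b + x + y) * (\<Prod>c\<in>B. fact (c + y)) * fact_prod_set {..<y} * fact y"
proof -
  let ?Y = "(\<lambda>c. c + y) ` B"
  have fin: "finite ?Y" "finite {1..y}" unfolding B_def by (simp_all add: finite_lower_betas)
  note below = lower_betas_shift_below(1)[OF gm, of y, folded B_def]
    lower_betas_shift_below(2)[OF gm, where x=x and y=y, folded b_def B_def]
  have injy: "inj_on (\<lambda>c. c + y) B" by (rule inj_onI) simp
  have "fact_prod_set (beta_set (star gm x y)) = fact (b + x + y) * fact_prod_set (?Y \<union> {1..y})"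
    unfolding beta_set_star[OF gm] b_def[symmetric] B_def[symmetric]
    by (rule fact_prod_set_insert) (use fin below in auto)
  also have "fact_prod_set (?Y \<union> {1..y}) = fact_prod_set ?Y * fact_prod_set {1..y}"
    unfolding fact_prod_set_def by (rule prod.union_disjoint) (use fin below in auto)
  finally show ?thesis
    unfolding fact_prod_set_atLeast1 by (simp add: fact_prod_set_def prod.reindex[OF injy])
qed

theorem hook_prod_star:
  assumes gm: "is_partition gm" "gm \<noteq> []"
  defines "b \<equiv> corner_hook gm" and "B \<equiv> lower_betas gm"
  shows "hook_prod (star gm x y) * diff_prod B * (\<Prod>c\<in>B. b - c + x) =
         (b + x + y) * (\<Prod>c\<in>B. c + y) * fact y * fact (b + x - 1) * (\<Prod>c\<in>B. fact (c - 1))"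
proof -
  let ?H = "hook_prod (star gm x y)" and ?Q = "\<Prod>c\<in>B. b - c + x"
  define S where "S = fact_prod_set {..<y}"
  define R where "R = (\<Prod>c\<in>B. \<Prod>t\<in>{1..y}. c + y - t)"
  define T where "T = (\<Prod>t\<in>{1..y}. b + x + y - t)"
  define FB where "FB = (\<Prod>c\<in>B. fact (c - 1) :: nat)"
  define FBy where "FBy = (\<Prod>c\<in>B. fact (c + y - 1) :: nat)"
  define P where "P = (\<Prod>c\<in>B. c + y)"
  define F1 where "F1 = (fact (b + x + y - 1) :: nat)"
  have B1: "1 \<le> c" if "c \<in> B" for c using lower_betas_bounds[OF gm] that unfolding B_def by auto
  have b1: "1 \<le> b" unfolding b_def using length_le_corner_hook[OF gm] gm(2) by (cases gm) auto
  have eq0: "?H * (diff_prod B * S * R * ?Q * T) = fact (b + x + y) * (\<Prod>c\<in>B. fact (c + y)) * S * fact y"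
    using hook_prod_beta_set[OF star_partition[OF gm], of x y]
    unfolding diff_prod_beta_set_star[OF gm] fact_prod_set_beta_set_star[OF gm]
    by (simp add: S_def R_def T_def b_def B_def)
  have RFB: "R * FB = FBy" unfolding R_def FB_def FBy_def prod.distrib[symmetric]
    by (rule prod.cong[OF refl], rule prod_atLeast1_shift_fact) (use B1 in auto)
  have TF: "T * fact (b + x - 1) = F1" unfolding T_def F1_def
    using prod_atLeast1_shift_fact[of "b + x" y] b1 by simp
  have PFy: "(\<Prod>c\<in>B. fact (c + y)) = P * FBy" unfolding P_def FBy_def prod.distrib[symmetric]
  proof (rule prod.cong[OF refl])
    fix c assume "c \<in> B"
    then have "1 \<le> c + y" using B1 by fastforce
    then show "fact (c + y) = (c + y) * fact (c + y - 1)" by (cases "c + y") auto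
  qed
  have Fb: "fact (b + x + y) = (b + x + y) * F1" unfolding F1_def using b1
    by (simp add: fact_reduce)
  have "?H * diff_prod B * ?Q * (S * FBy * F1) =
      (?H * (diff_prod B * S * R * ?Q * T)) * (FB * fact (b + x - 1))"
    unfolding RFB[symmetric] TF[symmetric] by (simp only: ac_simps)
  also have "\<dots> = ((b + x + y) * P * fact y * fact (b + x - 1) * FB) * (S * FBy * F1)"
    unfolding eq0 Fb PFy by (simp only: ac_simps)
  finally have "?H * diff_prod B * ?Q * (S * FBy * F1) =
      ((b + x + y) * P * fact y * fact (b + x - 1) * FB) * (S * FBy * F1)" .
  moreover have "S * FBy * F1 \<noteq> 0" unfolding S_def FBy_def F1_def
    using fact_prod_set_pos[of "{..<y}"]
    by (simp add: prod_pos)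
  ultimately show ?thesis unfolding P_def FB_def using mult_right_cancel by blast
qed

lemma hook_prod_star_nil: "0 < x \<Longrightarrow> hook_prod (star [] x y) = (x + y) * fact y * fact (x - 1)"
  using hook_prod_star[OF is_partition_single, of "x - 1" y] star_nil[of x y]
  by (simp add: lower_betas_def corner_hook_def)

section \<open>Legendre's formula and Kummer's criterion\<close>

lemma multiplicity_fact_Suc:
  assumes "prime (p::nat)"
  shows "multiplicity p (fact (Suc n) :: nat) = multiplicity p (Suc n) + multiplicity p (fact n :: nat)"
proof -
  have "fact (Suc n) = (Suc n) * (fact n :: nat)" by simp
  moreover have "multiplicity p (Suc n * (fact n :: nat)) =
      multiplicity p (Suc n) + multiplicity p (fact n :: nat)"
    by (rule prime_elem_multiplicity_mult_distrib) (use assms in auto)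
  ultimately show ?thesis by simp
qed

lemma card_prime_power_divisors:
  assumes "prime (p::nat)" "0 < m" "m \<le> K"
  shows "card {i\<in>{1..K}. p^i dvd m} = multiplicity p m"
proof -
  have nu: "\<not> is_unit p" using prime_gt_1_nat[OF assms(1)] by simp
  have m0: "m \<noteq> 0" using assms(2) by simp
  have le: "multiplicity p m \<le> K"
  proof -
    have "p ^ multiplicity p m dvd m" by (rule multiplicity_dvd)
    then have "p ^ multiplicity p m \<le> m" using assms(2) by (simp add: dvd_imp_le)
    moreover have "multiplicity p m < p ^ multiplicity p m"
    proof -
      have "multiplicity p m < 2 ^ multiplicity p m" by (rule less_exp)
      moreover have "(2::nat) ^ multiplicity p m \<le> p ^ multiplicity p m"
        by (rule power_mono) (use prime_ge_2_nat[OF assms(1)] in auto)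
      ultimately show ?thesis by linarith
    qed
    ultimately show ?thesis using assms(3) by linarith
  qed
  have "{i\<in>{1..K}. p^i dvd m} = {1..multiplicity p m}"
  proof (intro set_eqI iffI)
    fix i assume "i \<in> {i\<in>{1..K}. p^i dvd m}"
    then have "1 \<le> i" "p^i dvd m" by auto
    then show "i \<in> {1..multiplicity p m}" using power_dvd_iff_le_multiplicity[OF m0 nu, of i]
      by simp
  next
    fix i assume i: "i \<in> {1..multiplicity p m}"
    then have "p^i dvd m" using power_dvd_iff_le_multiplicity[OF m0 nu, of i] by simp
    then show "i \<in> {i\<in>{1..K}. p^i dvd m}" using i le by simp
  qed
  then show ?thesis by simp
qed

lemma Suc_div_eq:
  assumes "0 < (q::nat)"
  shows "Suc n div q = n div q + (if q dvd Suc n then 1 else 0)"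
  using div_Suc[of n q] by (auto simp: dvd_eq_mod_eq_0)

lemma legendre_multiplicity_fact:
  assumes "prime (p::nat)" "n \<le> K"
  shows "multiplicity p (fact n :: nat) = (\<Sum>i\<in>{1..K}. n div p^i)"
  using assms(2)
proof (induction n)
  case 0 then show ?case by simp
next
  case (Suc n)
  have p0: "\<And>i. 0 < p ^ i" using assms(1) prime_gt_0_nat by simp
  have "(\<Sum>i\<in>{1..K}. Suc n div p^i) = (\<Sum>i\<in>{1..K}. n div p^i) + (\<Sum>i\<in>{1..K}. if p^i dvd Suc n then 1 else 0)"
    by (simp add: Suc_div_eq[OF p0] sum.distrib)
  also have "(\<Sum>i\<in>{1..K}. if p^i dvd Suc n then 1 else (0::nat)) = card {i\<in>{1..K}. p^i dvd Suc n}"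
  proof -
    have "{i\<in>{1..K}. p^i dvd Suc n} = {1..K} \<inter> {i. p^i dvd Suc n}" by auto
    then show ?thesis by (simp add: sum.If_cases)
  qed
  also have "\<dots> = multiplicity p (Suc n)"
    by (rule card_prime_power_divisors[OF assms(1)]) (use Suc.prems in auto)
  finally show ?case using multiplicity_fact_Suc[OF assms(1), of n] Suc by simp
qed

lemma div_add_no_carry:
  assumes "B \<le> A" "B mod q \<le> A mod (q::nat)" "0 < q"
  shows "A div q = B div q + (A - B) div q"
proof -
  have A: "A = B + (A - B)" using assms(1) by simp
  have "A div q = B div q + (A - B) div q + (B mod q + (A - B) mod q) div q"
    using div_add1_eq[of B "A - B" q] A by simp
  moreover have "B mod q + (A - B) mod q < q"
  proof (rule ccontr)
    assume "\<not> B mod q + (A - B) mod q < q"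
    moreover have "(B mod q + (A - B) mod q) mod q = A mod q" using A by (metis mod_add_eq)
    moreover have "B mod q + (A - B) mod q < 2 * q" using assms(3)
      by (simp add: mod_less_divisor add_strict_mono mult_2)
    ultimately have "B mod q + (A - B) mod q = A mod q + q"
      by (metis le_add_diff_inverse2 less_diff_conv2 mod_if mult_2 not_le)
    moreover have "(A - B) mod q < q" using assms(3) by simp
    ultimately show False using assms(2) by linarith
  qed
  ultimately show ?thesis by simp
qed

theorem kummer_not_dvd_choose:
  assumes "prime (p::nat)" "B \<le> A" "\<forall>i. B mod p^i \<le> A mod p^i"
  shows "\<not> p dvd (A choose B)"
proof -
  have nu: "\<not> is_unit p" using prime_gt_1_nat[OF assms(1)] by simp
  have C0: "A choose B \<noteq> 0" using assms(2) by simp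
  have eq: "fact B * fact (A - B) * (A choose B) = (fact A :: nat)"
    by (rule binomial_fact_lemma[OF assms(2)])
  have "multiplicity p (fact A :: nat) =
      multiplicity p (fact B :: nat) + multiplicity p (fact (A - B) :: nat) + multiplicity p (A choose B)"
  proof -
    have "multiplicity p (fact B * fact (A - B) * (A choose B) :: nat) =
          multiplicity p (fact B * fact (A - B) :: nat) + multiplicity p (A choose B)"
      by (rule prime_elem_multiplicity_mult_distrib) (use assms(1) C0 in auto)
    also have "multiplicity p (fact B * fact (A - B) :: nat) =
        multiplicity p (fact B :: nat) + multiplicity p (fact (A - B) :: nat)"
      by (rule prime_elem_multiplicity_mult_distrib) (use assms(1) in auto)
    finally show ?thesis using eq by simp
  qed
  moreover have "multiplicity p (fact A :: nat) =
      multiplicity p (fact B :: nat) + multiplicity p (fact (A - B) :: nat)"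
  proof -
    have p0: "\<And>i. 0 < p ^ i" using assms(1) prime_gt_0_nat by simp
    have "multiplicity p (fact A :: nat) = (\<Sum>i\<in>{1..A}. A div p^i)"
      by (rule legendre_multiplicity_fact[OF assms(1)]) simp
    also have "\<dots> = (\<Sum>i\<in>{1..A}. B div p^i + (A - B) div p^i)"
      by (rule sum.cong[OF refl], rule div_add_no_carry) (use assms p0 in auto)
    also have "\<dots> = (\<Sum>i\<in>{1..A}. B div p^i) + (\<Sum>i\<in>{1..A}. (A - B) div p^i)" by (rule sum.distrib)
    also have "(\<Sum>i\<in>{1..A}. B div p^i) = multiplicity p (fact B :: nat)"
      by (rule legendre_multiplicity_fact[OF assms(1), symmetric]) (use assms(2) in simp)
    also have "(\<Sum>i\<in>{1..A}. (A - B) div p^i) = multiplicity p (fact (A - B) :: nat)"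
      by (rule legendre_multiplicity_fact[OF assms(1), symmetric]) simp
    finally show ?thesis .
  qed
  ultimately have "multiplicity p (A choose B) = 0" by simp
  then show ?thesis by (simp add: multiplicity_eq_zero_iff[OF C0 nu])
qed

section \<open>Removing rim hooks from star shapes\<close>

definition adj_within :: "(nat \<times> nat) set \<Rightarrow> nat \<times> nat \<Rightarrow> nat \<times> nat \<Rightarrow> bool" where
  "adj_within S = (\<lambda>x y. x \<in> S \<and> y \<in> S \<and> cell_adj x y)"

lemma adj_within_sym: "adj_within S x y \<Longrightarrow> adj_within S y x"
  unfolding adj_within_def cell_adj_def by auto

lemma adj_within_rtranclp_sym: "(adj_within S)\<^sup>*\<^sup>* x y \<Longrightarrow> (adj_within S)\<^sup>*\<^sup>* y x"
proof (induction rule: rtranclp_induct)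
  case base then show ?case by simp
next
  case (step y z)
  then show ?case using adj_within_sym by (meson converse_rtranclp_into_rtranclp)
qed

lemma cells_connected_iff_adj_within: "cells_connected S \<longleftrightarrow> S \<noteq> {} \<and> (\<forall>c\<in>S. \<forall>d\<in>S. (adj_within S)\<^sup>*\<^sup>* c d)"
  unfolding cells_connected_def adj_within_def ..

lemma row_path:
  assumes "\<forall>j. j1 \<le> j \<and> j \<le> j2 \<longrightarrow> (r,j) \<in> S" "j1 \<le> j2"
  shows "(adj_within S)\<^sup>*\<^sup>* (r,j1) (r,j2)"
  using assms
proof (induction j2)
  case 0 then show ?case by simp
next
  case (Suc j2)
  show ?case
  proof (cases "j1 = Suc j2")
    case True then show ?thesis by simp
  next
    case False
    then have "(adj_within S)\<^sup>*\<^sup>* (r,j1) (r,j2)" using Suc by simp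
    moreover have "adj_within S (r,j2) (r, Suc j2)" using Suc.prems False
      unfolding adj_within_def cell_adj_def by auto
    ultimately show ?thesis by (rule rtranclp.rtrancl_into_rtrancl)
  qed
qed

lemma col_path:
  assumes "\<forall>i. i1 \<le> i \<and> i \<le> i2 \<longrightarrow> (i,c) \<in> S" "i1 \<le> i2"
  shows "(adj_within S)\<^sup>*\<^sup>* (i1,c) (i2,c)"
  using assms
proof (induction i2)
  case 0 then show ?case by simp
next
  case (Suc i2)
  show ?case
  proof (cases "i1 = Suc i2")
    case True then show ?thesis by simp
  next
    case False
    then have "(adj_within S)\<^sup>*\<^sup>* (i1,c) (i2,c)" using Suc by simp
    moreover have "adj_within S (i2,c) (Suc i2, c)" using Suc.prems False
      unfolding adj_within_def cell_adj_def by auto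
    ultimately show ?thesis by (rule rtranclp.rtrancl_into_rtrancl)
  qed
qed

definition rowseg :: "nat \<Rightarrow> nat \<Rightarrow> nat \<Rightarrow> (nat \<times> nat) set" where
  "rowseg r a p = {(r,j) | j. a \<le> j \<and> j < a + p}"

definition colseg :: "nat \<Rightarrow> nat \<Rightarrow> nat \<Rightarrow> (nat \<times> nat) set" where
  "colseg c a p = {(i,c) | i. a \<le> i \<and> i < a + p}"

definition hookset :: "nat \<Rightarrow> nat \<Rightarrow> (nat \<times> nat) set" where
  "hookset r s = {(0,j) | j. j \<le> r} \<union> {(i,0) | i. 1 \<le> i \<and> i \<le> s}"

lemma card_rowseg: "card (rowseg r a p) = p"
proof -
  have "rowseg r a p = (\<lambda>j. (r,j)) ` {a..<a+p}" unfolding rowseg_def by auto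
  moreover have "inj_on (\<lambda>j. (r,j)) {a..<a+p}" by (rule inj_onI) auto
  ultimately show ?thesis by (simp add: card_image)
qed

lemma card_colseg: "card (colseg c a p) = p"
proof -
  have "colseg c a p = (\<lambda>i. (i,c)) ` {a..<a+p}" unfolding colseg_def by auto
  moreover have "inj_on (\<lambda>i. (i,c)) {a..<a+p}" by (rule inj_onI) auto
  ultimately show ?thesis by (simp add: card_image)
qed

lemma cells_connected_rowseg:
  assumes "0 < p" shows "cells_connected (rowseg r a p)"
  unfolding cells_connected_iff_adj_within
proof (intro conjI ballI)
  show "rowseg r a p \<noteq> {}" using assms unfolding rowseg_def by auto
next
  fix c d assume c: "c \<in> rowseg r a p" and d: "d \<in> rowseg r a p"
  then obtain j1 j2 where cd: "c = (r,j1)" "d = (r,j2)" "a \<le> j1" "j1 < a + p" "a \<le> j2" "j2 < a + p"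
    unfolding rowseg_def by auto
  have all: "\<forall>j. min j1 j2 \<le> j \<and> j \<le> max j1 j2 \<longrightarrow> (r,j) \<in> rowseg r a p"
    using cd unfolding rowseg_def by auto
  show "(adj_within (rowseg r a p))\<^sup>*\<^sup>* c d"
  proof (cases "j1 \<le> j2")
    case True then show ?thesis using row_path[of j1 j2 r] all cd by simp
  next
    case False
    then have "(adj_within (rowseg r a p))\<^sup>*\<^sup>* d c" using row_path[of j2 j1 r] all cd by simp
    then show ?thesis by (rule adj_within_rtranclp_sym)
  qed
qed

lemma cells_connected_colseg:
  assumes "0 < p" shows "cells_connected (colseg c a p)"
  unfolding cells_connected_iff_adj_within
proof (intro conjI ballI)
  show "colseg c a p \<noteq> {}" using assms unfolding colseg_def by auto
next
  fix x y assume x: "x \<in> colseg c a p" and y: "y \<in> colseg c a p"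
  then obtain i1 i2 where cd: "x = (i1,c)" "y = (i2,c)" "a \<le> i1" "i1 < a + p" "a \<le> i2" "i2 < a + p"
    unfolding colseg_def by auto
  have all: "\<forall>i. min i1 i2 \<le> i \<and> i \<le> max i1 i2 \<longrightarrow> (i,c) \<in> colseg c a p"
    using cd unfolding colseg_def by auto
  show "(adj_within (colseg c a p))\<^sup>*\<^sup>* x y"
  proof (cases "i1 \<le> i2")
    case True then show ?thesis using col_path[of i1 i2 c] all cd by simp
  next
    case False
    then have "(adj_within (colseg c a p))\<^sup>*\<^sup>* y x" using col_path[of i2 i1 c] all cd by simp
    then show ?thesis by (rule adj_within_rtranclp_sym)
  qed
qed

lemma cells_connected_hookset: "cells_connected (hookset r s)"
  unfolding cells_connected_iff_adj_within
proof (intro conjI ballI)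
  show "hookset r s \<noteq> {}" unfolding hookset_def by auto
next
  have to0: "(adj_within (hookset r s))\<^sup>*\<^sup>* c (0,0)" if "c \<in> hookset r s" for c
  proof -
    from that consider (a) j where "c = (0,j)" "j \<le> r" | (b) i where "c = (i,0)" "1 \<le> i" "i \<le> s"
      unfolding hookset_def by auto
    then show ?thesis
    proof cases
      case a
      have "(adj_within (hookset r s))\<^sup>*\<^sup>* (0,0) (0,j)"
        by (rule row_path) (use a in \<open>auto simp: hookset_def\<close>)
      then show ?thesis using a adj_within_rtranclp_sym by blast
    next
      case b
      have "(adj_within (hookset r s))\<^sup>*\<^sup>* (0,0) (i,0)"
        by (rule col_path) (use b in \<open>auto simp: hookset_def\<close>)
      then show ?thesis using b adj_within_rtranclp_sym by blast
    qed
  qed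
  fix c d assume "c \<in> hookset r s" "d \<in> hookset r s"
  then show "(adj_within (hookset r s))\<^sup>*\<^sup>* c d" using to0 adj_within_rtranclp_sym
    by (meson rtranclp_trans)
qed

lemma no_square_rowseg: "no_square (rowseg r a p)"
  unfolding no_square_def rowseg_def by auto

lemma no_square_colseg: "no_square (colseg c a p)"
  unfolding no_square_def colseg_def by auto

lemma no_square_hookset: "no_square (hookset r s)"
  unfolding no_square_def hookset_def by auto

lemma remove_hook_row:
  assumes "is_partition gm" "gm \<noteq> []" "0 < p"
  shows "remove_hook p (star gm (u+p) v) (star gm u v)"
proof -
  let ?g = "gm!0" and ?l = "length gm"
  have l0: "0 < ?l" using assms(2) by simp
  have dg: "(0,j) \<notin> diagram gm" if "?g \<le> j" for j using that by (simp add: mem_diagram_iff)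
  have "diagram (star gm (u+p) v) - diagram (star gm u v) = rowseg 0 (?g + u) p"
    unfolding star_diagram[OF assms(1,2)] rowseg_def using dg l0 by auto
  moreover have "diagram (star gm u v) \<subseteq> diagram (star gm (u+p) v)"
    unfolding star_diagram[OF assms(1,2)] by auto
  ultimately show ?thesis unfolding remove_hook_def
    using star_partition[OF assms(1,2)] card_rowseg cells_connected_rowseg[OF assms(3)] no_square_rowseg
      by simp
qed

lemma remove_hook_col:
  assumes "is_partition gm" "gm \<noteq> []" "0 < p"
  shows "remove_hook p (star gm u (v+p)) (star gm u v)"
proof -
  let ?g = "gm!0" and ?l = "length gm"
  have dg: "(i,0) \<notin> diagram gm" if "?l \<le> i" for i using that by (simp add: mem_diagram_iff)
  have "diagram (star gm u (v+p)) - diagram (star gm u v) = colseg 0 (?l + v) p"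
    unfolding star_diagram[OF assms(1,2)] colseg_def using dg assms(2) by auto
  moreover have "diagram (star gm u v) \<subseteq> diagram (star gm u (v+p))"
    unfolding star_diagram[OF assms(1,2)] by auto
  ultimately show ?thesis unfolding remove_hook_def
    using star_partition[OF assms(1,2)] card_colseg cells_connected_colseg[OF assms(3)] no_square_colseg
      by simp
qed

lemma remove_hook_star_single:
  assumes "r + s + 1 = p"
  shows "remove_hook p (star [1] r s) []"
proof -
  have d1: "diagram [1::nat] = {(0,0)}" by (auto simp: diagram_def)
  have "diagram (star [1] r s) = diagram [1] \<union> {(0,j) | j. [1::nat]!0 \<le> j \<and> j < [1::nat]!0 + r}
           \<union> {(i,0) | i. length [1::nat] \<le> i \<and> i < length [1::nat] + s}"
    by (rule star_diagram[OF is_partition_single]) simp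
  also have "\<dots> = hookset r s" unfolding d1 hookset_def by auto
  finally have "diagram (star [1] r s) = hookset r s" .
  moreover have "card (hookset r s) = p"
  proof -
    have "hookset r s = (\<lambda>j. (0,j)) ` {..r} \<union> (\<lambda>i. (i,0)) ` {1..s}" unfolding hookset_def by auto
    moreover have "card ((\<lambda>j. (0::nat,j)) ` {..r}) = r + 1"
      by (subst card_image) (auto intro: inj_onI)
    moreover have "card ((\<lambda>i. (i,0::nat)) ` {1..s}) = s" by (subst card_image) (auto intro: inj_onI)
    moreover have "(\<lambda>j. (0::nat,j)) ` {..r} \<inter> (\<lambda>i. (i,0::nat)) ` {1..s} = {}" by auto
    ultimately show ?thesis using assms by (simp add: card_Un_disjoint)
  qed
  ultimately show ?thesis unfolding remove_hook_def
    using cells_connected_hookset no_square_hookset by (simp add: diagram_def is_partition_def)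
qed

lemma remove_hooks_row:
  assumes "is_partition gm" "gm \<noteq> []" "0 < p"
  shows "(remove_hook p)\<^sup>*\<^sup>* (star gm (u + q*p) v) (star gm u v)"
proof (induction q)
  case 0 then show ?case by simp
next
  case (Suc q)
  have "remove_hook p (star gm ((u + q*p) + p) v) (star gm (u + q*p) v)"
    by (rule remove_hook_row[OF assms])
  then show ?case using Suc
    by (simp add: add.assoc add.commute[of p] converse_rtranclp_into_rtranclp)
qed

lemma remove_hooks_col:
  assumes "is_partition gm" "gm \<noteq> []" "0 < p"
  shows "(remove_hook p)\<^sup>*\<^sup>* (star gm u (v + q*p)) (star gm u v)"
proof (induction q)
  case 0 then show ?case by simp
next
  case (Suc q)
  have "remove_hook p (star gm u ((v + q*p) + p)) (star gm u (v + q*p))"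
    by (rule remove_hook_col[OF assms])
  then show ?case using Suc
    by (simp add: add.assoc add.commute[of p] converse_rtranclp_into_rtranclp)
qed

lemma star_0_0:
  assumes "is_partition gm" "gm \<noteq> []"
  shows "star gm 0 0 = gm"
  using assms by (simp add: star_eq) (metis hd_Cons_tl hd_conv_nth)

lemma remove_hooks_star_to_core:
  assumes "is_partition gm" "gm \<noteq> []" "0 < p" "p dvd x" "p dvd y"
  shows "(remove_hook p)\<^sup>*\<^sup>* (star gm x y) gm"
proof -
  obtain q1 where q1: "x = q1 * p" using assms(4) by (metis dvdE mult.commute)
  obtain q2 where q2: "y = q2 * p" using assms(5) by (metis dvdE mult.commute)
  note q = q1 q2
  have "(remove_hook p)\<^sup>*\<^sup>* (star gm (0 + q1*p) (q2*p)) (star gm 0 (q2*p))"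
    by (rule remove_hooks_row[OF assms(1-3)])
  moreover have "(remove_hook p)\<^sup>*\<^sup>* (star gm 0 (0 + q2*p)) (star gm 0 0)"
    by (rule remove_hooks_col[OF assms(1-3)])
  ultimately show ?thesis using q star_0_0[OF assms(1,2)] by simp
qed

lemma remove_hooks_star_nil_to_empty:
  assumes "0 < p" "0 < x" "p dvd (x + y)"
  shows "(remove_hook p)\<^sup>*\<^sup>* (star [] x y) []"
proof -
  define r where "r = (x - 1) mod p"
  define s where "s = y mod p"
  have x1: "x - 1 = r + ((x - 1) div p) * p" unfolding r_def by simp
  have y1: "y = s + (y div p) * p" unfolding s_def by simp
  have rp: "r < p" "s < p" unfolding r_def s_def using assms(1) by simp_all
  have "p dvd (r + s + 1)"
  proof -
    have "x + y = (r + s + 1) + ((x - 1) div p + y div p) * p" using x1 y1 assms(2)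
      by (simp add: algebra_simps)
    then show ?thesis using assms(3) by (metis dvd_add_times_triv_right_iff)
  qed
  then obtain k where k: "r + s + 1 = p * k" by (auto elim!: dvdE)
  have "0 < k" using k by (cases k) auto
  moreover have "k < 2" using k rp by (cases "k \<ge> 2") (auto dest: mult_le_mono2[of 2 k p])
  ultimately have rs: "r + s + 1 = p" using k by (cases k) auto
  have "star [] x y = star [1] (x - 1) y" using star_nil[OF assms(2)] .
  moreover have "(remove_hook p)\<^sup>*\<^sup>* (star [1] (r + ((x - 1) div p) * p) y) (star [1] r y)"
    by (rule remove_hooks_row[OF is_partition_single _ assms(1)]) simp
  moreover have "(remove_hook p)\<^sup>*\<^sup>* (star [1] r (s + (y div p) * p)) (star [1] r s)"
    by (rule remove_hooks_col[OF is_partition_single _ assms(1)]) simp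
  moreover have "remove_hook p (star [1] r s) []" by (rule remove_hook_star_single[OF rs])
  ultimately show ?thesis using x1 y1
    by (metis (no_types, lifting) rtranclp.rtrancl_into_rtrancl rtranclp_trans)
qed

lemma no_remove_hook_small:
  assumes "sum_list gm < p"
  shows "\<not> (\<exists>mu. remove_hook p gm mu)"
proof
  assume "\<exists>mu. remove_hook p gm mu"
  then obtain mu where "remove_hook p gm mu" by blast
  then have "card (diagram gm - diagram mu) = p" by (simp add: remove_hook_def)
  moreover have "card (diagram gm - diagram mu) \<le> card (diagram gm)"
    by (rule card_mono) (auto simp: finite_diagram)
  ultimately show False using assms card_diagram by simp
qed

section \<open>Contents of rim hooks\<close>

definition cell_content :: "nat \<times> nat \<Rightarrow> int" where "cell_content c = int (snd c) - int (fst c)"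

definition content_sum :: "(nat \<times> nat) set \<Rightarrow> int" where "content_sum S = (\<Sum>c\<in>S. cell_content c)"

lemma inj_on_content_rim_hook:
  assumes "is_partition la" "is_partition mu" "remove_hook p la mu"
  shows "inj_on cell_content (diagram la - diagram mu)"
proof (rule inj_onI, rule ccontr)
  let ?D = "diagram la - diagram mu"
  have ns: "no_square ?D" using assms(3) by (simp add: remove_hook_def)
  have key: False if c1: "(i,j) \<in> ?D" and c2: "(i',j') \<in> ?D" and lt: "i <
      i'" and eq: "int j - int i = int j' - int i'"
    for i j i' j'
  proof -
    have jj: "j < j'" using lt eq by linarith
    have inla: "(a,b) \<in> diagram la" if "a \<le> i'" "b \<le> j'" for a b
      using diagram_downward_closed[OF assms(1), of i' j' a b] c2 that by auto
    have notmu: "(a,b) \<notin> diagram mu" if "i \<le> a" "j \<le> b" for a b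
      using diagram_downward_closed[OF assms(2), of a b i j] c1 that by auto
    have "(i,j) \<in> ?D" "(Suc i, j) \<in> ?D" "(i, Suc j) \<in> ?D" "(Suc i, Suc j) \<in> ?D"
      using inla notmu lt jj c1 by auto
    then show False using ns unfolding no_square_def by blast
  qed
  fix c d assume c: "c \<in> ?D" and d: "d \<in> ?D" and cd: "cell_content c = cell_content d" and ne: "c \<noteq> d"
  obtain i j i' j' where ij: "c = (i,j)" "d = (i',j')" by (cases c, cases d) auto
  have eq: "int j - int i = int j' - int i'" using cd ij by (simp add: cell_content_def)
  show False
  proof (cases "i < i'")
    case True then show False using key[of i j i' j'] c d ij eq by simp
  next
    case False
    show False
    proof (cases "i' < i")
      case True then show False using key[of i' j' i j] c d ij eq by simp
    next
      case False
      then have "i = i'" using \<open>\<not> i < i'\<close> by simp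
      then have "j = j'" using eq by simp
      then show False using ne ij \<open>i = i'\<close> by simp
    qed
  qed
qed

lemma cell_adj_content: "cell_adj c d \<Longrightarrow> cell_content d =
    cell_content c + 1 \<or> cell_content d = cell_content c - 1"
  unfolding cell_adj_def cell_content_def by auto

lemma content_path_interval:
  assumes "(adj_within S)\<^sup>*\<^sup>* c d" "c \<in> S"
  shows "\<forall>v. min (cell_content c) (cell_content d) \<le> v \<and> v \<le>
      max (cell_content c) (cell_content d) \<longrightarrow> (\<exists>e\<in>S. cell_content e = v)"
  using assms(1)
proof (induction rule: rtranclp_induct)
  case base
  then show ?case using assms(2) by auto
next
  case (step d' d)
  have dS: "d \<in> S" and adj: "cell_adj d' d" using step.hyps(2) unfolding adj_within_def by auto
  have a: "cell_content d = cell_content d' + 1 \<or> cell_content d = cell_content d' - 1"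
    by (rule cell_adj_content[OF adj])
  show ?case
  proof (intro allI impI)
    fix v assume v: "min (cell_content c) (cell_content d) \<le> v \<and> v \<le> max (cell_content c) (cell_content d)"
    show "\<exists>e\<in>S. cell_content e = v"
    proof (cases "min (cell_content c) (cell_content d') \<le> v \<and> v \<le> max (cell_content c) (cell_content d')")
      case True then show ?thesis using step.IH by blast
    next
      case False
      then have "v = cell_content d" using v a by linarith
      then show ?thesis using dS by blast
    qed
  qed
qed

lemma sum_lessThan_int: "2 * (\<Sum>k<n. int k) = int n * (int n - 1)"
  by (induction n) (simp_all add: algebra_simps)

lemma content_image_rim_hook:
  assumes "is_partition la" "is_partition mu" "remove_hook p la mu"
  shows "\<exists>m. cell_content ` (diagram la - diagram mu) = (\<lambda>k. m + int k) ` {..<p}"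
proof -
  let ?D = "diagram la - diagram mu"
  let ?S = "cell_content ` ?D"
  have cD: "card ?D = p" and conn: "cells_connected ?D" using assms(3)
    by (auto simp: remove_hook_def)
  have fS: "finite ?S" using finite_diagram by simp
  have neS: "?S \<noteq> {}" using conn by (simp add: cells_connected_def)
  have cS: "card ?S = p" using card_image[OF inj_on_content_rim_hook[OF assms]] cD by simp
  define m where "m = Min ?S"
  define M where "M = Max ?S"
  have mS: "m \<in> ?S" and MS: "M \<in> ?S" unfolding m_def M_def using fS neS by auto
  have "{m..M} \<subseteq> ?S"
  proof
    fix v assume v: "v \<in> {m..M}"
    obtain c where c: "c \<in> ?D" "cell_content c = m" using mS by auto
    obtain d where d: "d \<in> ?D" "cell_content d = M" using MS by auto
    have "(adj_within ?D)\<^sup>*\<^sup>* c d" using conn c d unfolding cells_connected_iff_adj_within by blast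
    from content_path_interval[OF this c(1)] v c d show "v \<in> ?S" by auto
  qed
  moreover have "?S \<subseteq> {m..M}" unfolding m_def M_def using fS by auto
  ultimately have S: "?S = {m..M}" by blast
  then have "M = m + int p - 1" using cS mS by auto
  then have "{m..M} = (\<lambda>k. m + int k) ` {..<p}"
    by (auto simp: image_iff intro!: bexI[of _ "nat (v - m)" for v])
  then show ?thesis using S by blast
qed

lemma content_sum_rim_hook:
  assumes "is_partition la" "is_partition mu" "remove_hook p la mu"
  shows "\<exists>c0. 2 * content_sum (diagram la - diagram mu) = int p * (2 * c0 + int p - 1)"
proof -
  let ?D = "diagram la - diagram mu"
  obtain m where m: "cell_content ` ?D = (\<lambda>k. m + int k) ` {..<p}"
    using content_image_rim_hook[OF assms] by blast
  have inj: "inj_on cell_content ?D" by (rule inj_on_content_rim_hook[OF assms])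
  have injk: "inj_on (\<lambda>k. m + int k) {..<p}" by (rule inj_onI) simp
  have "content_sum ?D = (\<Sum>v\<in>cell_content ` ?D. v)"
    unfolding content_sum_def by (simp add: sum.reindex[OF inj])
  also have "\<dots> = int p * m + (\<Sum>k<p. int k)" unfolding m
    by (simp add: sum.reindex[OF injk] sum.distrib)
  finally have "2 * content_sum ?D = 2 * int p * m + int p * (int p - 1)"
    using sum_lessThan_int[of p] by simp
  then show ?thesis by (intro exI[of _ m]) (simp add: algebra_simps)
qed

lemma content_sum_remove_hooks:
  assumes "(remove_hook p)\<^sup>*\<^sup>* la ga" "is_partition la"
  shows "\<exists>C t. 2 * (content_sum (diagram la) - content_sum (diagram ga)) = 2 * int p * C + int t * int p * (int p - 1)
               \<and> card (diagram la) = card (diagram ga) + t * p"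
  using assms
proof (induction rule: converse_rtranclp_induct)
  case base
  then show ?case by (intro exI[of _ 0]) simp
next
  case (step la mu)
  have pm: "is_partition mu" using step.hyps(1) by (simp add: remove_hook_def)
  obtain C t where IH: "2 * (content_sum (diagram mu) - content_sum (diagram ga)) =
      2 * int p * C + int t * int p * (int p - 1)"
    "card (diagram mu) = card (diagram ga) + t * p" using step.IH[OF pm] by blast
  obtain c0 where c0: "2 * content_sum (diagram la - diagram mu) = int p * (2 * c0 + int p - 1)"
    using content_sum_rim_hook[OF step.prems pm step.hyps(1)] by blast
  have sub: "diagram mu \<subseteq> diagram la" and cd: "card (diagram la - diagram mu) = p"
    using step.hyps(1) by (auto simp: remove_hook_def)
  have "content_sum (diagram la) = content_sum (diagram mu) + content_sum (diagram la - diagram mu)"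
    unfolding content_sum_def using sum.subset_diff[OF sub finite_diagram, of cell_content]
      by (simp add: add.commute)
  moreover have "card (diagram la) = card (diagram mu) + p"
    using card_Diff_subset[OF finite_subset[OF sub finite_diagram] sub] cd card_mono[OF finite_diagram sub]
      by simp
  ultimately show ?case using IH c0
    by (intro exI[of _ "C + c0"] exI[of _ "Suc t"]) (simp add: algebra_simps)
qed

lemma sum_seg_int: "2 * (\<Sum>k<x. int (g + k)) = int x * (2 * int g + int x - 1)"
  by (induction x) (simp_all add: algebra_simps)

lemma sum_seg_int_neg: "2 * (\<Sum>k<x. - int g - int k) = - (int x * (2 * int g + int x - 1))"
  by (induction x) (simp_all add: algebra_simps)

lemma content_sum_star:
  assumes "is_partition gm" "gm \<noteq> []"
  shows "2 * content_sum (diagram (star gm x y)) = 2 * content_sum (diagram gm)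
           + int x * (2 * int (gm!0) + int x - 1) - int y * (2 * int (length gm) + int y - 1)"
proof -
  let ?g = "gm!0" and ?l = "length gm"
  define R where "R = {(0::nat,j) | j. ?g \<le> j \<and> j < ?g + x}"
  define Cc where "Cc = {(i,0::nat) | i. ?l \<le> i \<and> i < ?l + y}"
  have l0: "0 < ?l" using assms(2) by simp
  have R: "R = (\<lambda>k. (0, ?g + k)) ` {..<x}"
  proof (intro set_eqI iffI)
    fix c assume "c \<in> R"
    then obtain j where j: "c = (0,j)" "?g \<le> j" "j < ?g + x" unfolding R_def by auto
    then have "c = (0, ?g + (j - ?g))" "j - ?g < x" by auto
    then show "c \<in> (\<lambda>k. (0, ?g + k)) ` {..<x}" by blast
  qed (auto simp: R_def)
  have C: "Cc = (\<lambda>k. (?l + k, 0)) ` {..<y}"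
  proof (intro set_eqI iffI)
    fix c assume "c \<in> Cc"
    then obtain i where i: "c = (i,0)" "?l \<le> i" "i < ?l + y" unfolding Cc_def by auto
    then have "c = (?l + (i - ?l), 0)" "i - ?l < y" by auto
    then show "c \<in> (\<lambda>k. (?l + k, 0)) ` {..<y}" by blast
  qed (auto simp: Cc_def)
  have injR: "inj_on (\<lambda>k. (0::nat, ?g + k)) {..<x}" by (rule inj_onI) auto
  have injC: "inj_on (\<lambda>k. (?l + k, 0::nat)) {..<y}" by (rule inj_onI) auto
  have d1: "diagram gm \<inter> R = {}" unfolding R_def by (auto simp: mem_diagram_iff)
  have d2: "(diagram gm \<union> R) \<inter> Cc = {}" unfolding R_def Cc_def using l0
    by (auto simp: mem_diagram_iff)
  have fR: "finite R" "finite Cc" unfolding R C by auto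
  have "content_sum (diagram (star gm x y)) = content_sum (diagram gm) + content_sum R + content_sum Cc"
    unfolding star_diagram[OF assms] R_def[symmetric] Cc_def[symmetric] content_sum_def
    using d1 d2 fR finite_diagram by (simp add: sum.union_disjoint)
  moreover have "2 * content_sum R = int x * (2 * int ?g + int x - 1)"
    unfolding R content_sum_def sum.reindex[OF injR] using sum_seg_int[where x=x and g="?g"]
      by (simp add: cell_content_def)
  moreover have "2 * content_sum Cc = - (int y * (2 * int ?l + int y - 1))"
    unfolding C content_sum_def sum.reindex[OF injC] using sum_seg_int_neg[where x=y and g="?l"]
      by (simp add: cell_content_def)
  ultimately show ?thesis by (simp add: algebra_simps)
qed

text \<open>The arm and leg of \<open>gm \<star> (x, y)\<close> consist of the cells of the \<open>t\<close> removed rim hooks.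
  Modulo \<open>p\<close>, the content sum of the hooks is \<open>t * p * (p - 1) / 2\<close>, while that of the arm and
  leg is \<open>x * corner_hook gm + t * p * (p - 1) / 2\<close> because \<open>x + y = t * p\<close>.\<close>

lemma remove_hooks_star_content_eq:
  assumes gm: "is_partition gm" "gm \<noteq> []"
    and chain: "(remove_hook p)\<^sup>*\<^sup>* (star gm x y) gm"
  shows "\<exists>K. int x * int (corner_hook gm) = int p * K"
proof -
  let ?g = "gm!0" and ?l = "length gm"
  obtain C t where Ct:
    "2 * (content_sum (diagram (star gm x y)) - content_sum (diagram gm)) =
        2 * int p * C + int t * int p * (int p - 1)"
    "card (diagram (star gm x y)) = card (diagram gm) + t * p"
    using content_sum_remove_hooks[OF chain star_partition[OF gm]] by blast
  have "x + y = t * p" using Ct(2) unfolding card_diagram star_sum[OF gm] by simp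
  then have y: "int y = int t * int p - int x"
    by (metis add_diff_cancel_left' of_nat_add of_nat_mult)
  have E: "int x * (2 * int ?g + int x - 1) - int y * (2 * int ?l + int y - 1) =
      2 * int p * C + int t * int p * (int p - 1)"
    using Ct(1) content_sum_star[OF gm, of x y] by simp
  obtain e where e: "int t * (int t + 1) = 2 * e" by (metis even_mult_iff even_add odd_one evenE)
  have M: "int (corner_hook gm) = int ?g + int ?l - 1" using gm(2)
    by (cases gm) (auto simp: corner_hook_def)
  have "2 * (int x * int (corner_hook gm)) = 2 * (int p * (C + int p * e + int t * (int ?l - 1 - int x)))"
    using E arg_cong[OF e, of "\<lambda>u. int p * int p * u"] unfolding M y by (simp add: algebra_simps)
  then show ?thesis by auto
qed

theorem remove_hooks_star_dvd_arm:
  assumes p: "prime p" and gm: "is_partition gm" "gm \<noteq> []" "sum_list gm < p"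
    and chain: "(remove_hook p)\<^sup>*\<^sup>* (star gm x y) gm"
  shows "p dvd x"
proof -
  obtain K where "int x * int (corner_hook gm) = int p * K"
    using remove_hooks_star_content_eq[OF gm(1,2) chain] by blast
  then have "int p dvd int (x * corner_hook gm)" by simp
  then have "p dvd x * corner_hook gm" by (simp only: int_dvd_int_iff)
  moreover have "0 < corner_hook gm" using length_le_corner_hook[OF gm(1,2)] gm(2)
    by (cases gm) auto
  moreover have "corner_hook gm < p" using corner_hook_le_sum_list[OF gm(1,2)] gm(3) by linarith
  ultimately show ?thesis using p by (auto simp: prime_dvd_mult_iff dest: dvd_imp_le)
qed

section \<open>Monotonicity of the hook product\<close>

lemma cross_mult_le:
  assumes "c \<le> (m::nat)" "u \<le> w"
  shows "(m + w) * (c + u) \<le> (m + u) * (c + w)"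
proof -
  obtain a where a: "m = c + a" using assms(1) le_Suc_ex by blast
  obtain b where b: "w = u + b" using assms(2) le_Suc_ex by blast
  show ?thesis unfolding a b by (simp add: algebra_simps)
qed

lemma prod_shift_ratio_le:
  "finite E \<Longrightarrow> card E = n \<Longrightarrow> \<forall>e\<in>E. 1 \<le> e \<Longrightarrow> u \<le> (w::nat) \<Longrightarrow>
   (\<Prod>e\<in>E. e + w) * (\<Prod>j\<in>{1..n}. j + u) \<le> (\<Prod>e\<in>E. e + u) * (\<Prod>j\<in>{1..n}. j + w)"
proof (induction n arbitrary: E)
  case 0
  then have "E = {}" by simp
  then show ?case by simp
next
  case (Suc n)
  have ne: "E \<noteq> {}" using Suc.prems(2) by auto
  define m where "m = Max E"
  have mE: "m \<in> E" unfolding m_def using Suc.prems(1) ne by simp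
  have le: "e \<le> m" if "e \<in> E" for e unfolding m_def using Suc.prems(1) that by simp
  have "E \<subseteq> {1..m}" using le Suc.prems(3) by auto
  then have "card E \<le> card {1..m}" by (rule card_mono[rotated]) simp
  then have nm: "Suc n \<le> m" using Suc.prems(2) by simp
  have fE': "finite (E - {m})" using Suc.prems(1) by simp
  have cE': "card (E - {m}) = n" using Suc.prems(2) mE Suc.prems(1) by simp
  have IH: "(\<Prod>e\<in>E-{m}. e + w) * (\<Prod>j\<in>{1..n}. j + u) \<le> (\<Prod>e\<in>E-{m}. e + u) * (\<Prod>j\<in>{1..n}. j + w)"
    using Suc.IH[OF fE' cE'] Suc.prems(3,4) by auto
  have pE: "(\<Prod>e\<in>E. e + z) = (m + z) * (\<Prod>e\<in>E-{m}. e + z)" for z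
    using prod.remove[OF Suc.prems(1) mE] by simp
  have pN: "(\<Prod>j\<in>{1..Suc n}. j + z) = (Suc n + z) * (\<Prod>j\<in>{1..n}. j + z)" for z
  proof -
    have "{1..Suc n} = insert (Suc n) {1..n}" by auto
    then show ?thesis by simp
  qed
  have sc: "(m + w) * (Suc n + u) \<le> (m + u) * (Suc n + w)"
    by (rule cross_mult_le[OF nm Suc.prems(4)])
  have "(\<Prod>e\<in>E. e + w) * (\<Prod>j\<in>{1..Suc n}. j + u) =
        ((m + w) * (Suc n + u)) * ((\<Prod>e\<in>E-{m}. e + w) * (\<Prod>j\<in>{1..n}. j + u))"
    unfolding pE pN by (simp only: ac_simps)
  also have "\<dots> \<le> ((m + u) * (Suc n + w)) * ((\<Prod>e\<in>E-{m}. e + u) * (\<Prod>j\<in>{1..n}. j + w))"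
    by (rule mult_le_mono[OF sc IH])
  also have "\<dots> = (\<Prod>e\<in>E. e + u) * (\<Prod>j\<in>{1..Suc n}. j + w)"
    unfolding pE pN by (simp only: ac_simps)
  finally show ?case .
qed

lemma fact_ratio_le:
  assumes "c \<le> (a::nat)"
  shows "fact a * fact (c + d) \<le> fact (a + d) * (fact c :: nat)"
proof (induction d)
  case 0 then show ?case by simp
next
  case (Suc d)
  have "fact a * fact (c + Suc d) = (Suc (c + d)) * (fact a * fact (c + d) :: nat)"
    by (simp add: algebra_simps)
  also have "\<dots> \<le> (Suc (a + d)) * (fact (a + d) * fact c)"
    by (rule mult_le_mono[OF _ Suc.IH]) (use assms in simp)
  also have "\<dots> = fact (a + Suc d) * fact c" by (simp add: algebra_simps)
  finally show ?case .
qed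

lemma fact_ratio_less:
  assumes "z < (x::nat)" "0 < d"
  shows "fact x * fact (z + d) < fact (x + d) * (fact z :: nat)"
  using assms(2)
proof (induction d)
  case 0 then show ?case by simp
next
  case (Suc d)
  show ?case
  proof (cases "d = 0")
    case True
    have "fact x * fact (z + 1) = Suc z * (fact x * fact z :: nat)" by (simp add: algebra_simps)
    also have "\<dots> < Suc x * (fact x * fact z)"
      using assms(1) by (intro mult_strict_right_mono) (auto simp: fact_gt_zero)
    also have "\<dots> = fact (x + 1) * fact z" by (simp add: algebra_simps)
    finally show ?thesis using True by simp
  next
    case False
    then have IH: "fact x * fact (z + d) < fact (x + d) * (fact z :: nat)" using Suc.IH by simp
    have "fact x * fact (z + Suc d) = Suc (z + d) * (fact x * fact (z + d) :: nat)"
      by (simp add: algebra_simps)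
    also have "\<dots> < Suc (x + d) * (fact (x + d) * fact z)"
      by (rule mult_le_less_imp_less[OF _ IH]) (use assms(1) in auto)
    also have "\<dots> = fact (x + Suc d) * fact z" by (simp add: algebra_simps)
    finally show ?thesis .
  qed
qed

lemma prod_atLeast1_add_fact: "(\<Prod>j\<in>{1..r}. j + u) * fact u = (fact (u + r) :: nat)"
proof (induction r)
  case 0 then show ?case by simp
next
  case (Suc r)
  have "{1..Suc r} = insert (Suc r) {1..r}" by auto
  then have "(\<Prod>j\<in>{1..Suc r}. j + u) = (Suc r + u) * (\<Prod>j\<in>{1..r}. j + u)" by simp
  then have "(\<Prod>j\<in>{1..Suc r}. j + u) * fact u = (Suc r + u) * ((\<Prod>j\<in>{1..r}. j + u) * fact u)"
    by (simp only: mult.assoc)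
  also have "\<dots> = (Suc r + u) * fact (u + r)" using Suc by simp
  also have "\<dots> = fact (u + Suc r)" by (simp add: algebra_simps)
  finally show ?case .
qed

lemma hook_prod_star_le_imp:
  assumes gm: "is_partition gm" "gm \<noteq> []" and xy: "x1 + y1 = x2 + y2"
    and le: "hook_prod (star gm x2 y2) \<le> hook_prod (star gm x1 y1)"
  defines "b \<equiv> corner_hook gm" and "B \<equiv> lower_betas gm"
  shows "(\<Prod>c\<in>B. c + y2) * fact y2 * fact (b + x2 - 1) * (\<Prod>c\<in>B. b - c + x1) \<le>
         (\<Prod>c\<in>B. c + y1) * fact y1 * fact (b + x1 - 1) * (\<Prod>c\<in>B. b - c + x2)"
proof -
  define Q where "Q x = (\<Prod>c\<in>B. b - c + x)" for x
  define FB where "FB = (\<Prod>c\<in>B. fact (c - 1) :: nat)"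
  have hp1: "hook_prod (star gm x1 y1) * diff_prod B * Q x1 =
             (b + x1 + y1) * (\<Prod>c\<in>B. c + y1) * fact y1 * fact (b + x1 - 1) * FB"
    unfolding Q_def FB_def b_def B_def by (rule hook_prod_star[OF gm])
  have hp2: "hook_prod (star gm x2 y2) * diff_prod B * Q x2 =
             (b + x1 + y1) * (\<Prod>c\<in>B. c + y2) * fact y2 * fact (b + x2 - 1) * FB"
    unfolding Q_def FB_def b_def B_def using hook_prod_star[OF gm, of x2 y2] xy by simp
  have "0 < b" using length_le_corner_hook[OF gm] gm(2) unfolding b_def by (cases gm) auto
  moreover have "0 < FB" unfolding FB_def by (intro prod_pos) auto
  ultimately have pos: "0 < (b + x1 + y1) * FB" by simp
  have "(b + x1 + y1) * FB * ((\<Prod>c\<in>B. c + y2) * fact y2 * fact (b + x2 - 1) * Q x1) =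
        hook_prod (star gm x2 y2) * diff_prod B * Q x2 * Q x1" using hp2 by (simp only: ac_simps)
  also have "\<dots> \<le> hook_prod (star gm x1 y1) * diff_prod B * Q x1 * Q x2" using le by simp
  also have "\<dots> = (b + x1 + y1) * FB * ((\<Prod>c\<in>B. c + y1) * fact y1 * fact (b + x1 - 1) * Q x2)"
    unfolding hp1 by (simp only: ac_simps)
  finally show ?thesis using pos unfolding Q_def by simp
qed

text \<open>Replacing the products over \<open>lower_betas gm\<close> by the extreme case \<open>{1..r}\<close>, where they
  become factorials.\<close>

lemma hook_prod_star_le_imp_fact_le:
  assumes gm: "is_partition gm" "gm \<noteq> []" and xy: "x1 \<le> x2" "x1 + y1 = x2 + y2"
    and le: "hook_prod (star gm x2 y2) \<le> hook_prod (star gm x1 y1)"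
  defines "b \<equiv> corner_hook gm" and "r \<equiv> length gm - 1"
  shows "fact (y2 + r) * fact (b + x2 - 1) * fact (x1 + r) * fact x2 \<le>
         fact (y1 + r) * fact (b + x1 - 1) * fact (x2 + r) * (fact x1 :: nat)"
proof -
  define B where "B = lower_betas gm"
  define P where "P y = (\<Prod>c\<in>B. c + y)" for y
  define Q where "Q x = (\<Prod>c\<in>B. b - c + x)" for x
  define R where "R u = (\<Prod>j\<in>{1..r}. j + u)" for u
  have fB: "finite B" unfolding B_def by (rule finite_lower_betas)
  have cB: "card B = r" unfolding r_def B_def by (rule card_lower_betas[OF gm(1)])
  have B1: "\<forall>c\<in>B. 1 \<le> c \<and> c < b" using lower_betas_bounds[OF gm] unfolding B_def b_def by auto
  have s1: "P y2 * fact y2 * fact (b + x2 - 1) * Q x1 \<le> P y1 * fact y1 * fact (b + x1 - 1) * Q x2"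
    unfolding P_def Q_def B_def b_def by (rule hook_prod_star_le_imp[OF gm xy(2) le])
  have RP: "P y1 * R y2 \<le> P y2 * R y1"
    unfolding P_def R_def cB[symmetric]
      by (rule prod_shift_ratio_le[OF fB refl]) (use B1 xy in auto)
  have injC: "inj_on (\<lambda>c. b - c) B" by (rule inj_onI) (use B1 in fastforce)
  have "Q x = (\<Prod>e\<in>(\<lambda>c. b - c) ` B. e + x)" for x unfolding Q_def
    by (simp add: prod.reindex[OF injC])
  moreover have "Q x2 * R x1 \<le> Q x1 * R x2" if "\<And>x. Q x = (\<Prod>e\<in>(\<lambda>c. b - c) ` B. e + x)"
    unfolding that R_def cB[symmetric] card_image[OF injC, symmetric]
    by (rule prod_shift_ratio_le[OF _ refl]) (use B1 fB xy in auto)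
  ultimately have RQ: "Q x2 * R x1 \<le> Q x1 * R x2" by blast
  have Ppos: "0 < P y" and Qpos: "0 < Q x" for x y unfolding P_def Q_def using B1
    by (auto intro!: prod_pos)
  have "(P y1 * Q x2) * (R y2 * fact y2 * fact (b + x2 - 1) * R x1) =
        (P y1 * R y2) * (Q x2 * R x1) * (fact y2 * fact (b + x2 - 1))" by (simp only: ac_simps)
  also have "\<dots> \<le> (P y2 * R y1) * (Q x1 * R x2) * (fact y2 * fact (b + x2 - 1))"
    by (intro mult_le_mono RP RQ le_refl)
  also have "\<dots> = (P y2 * fact y2 * fact (b + x2 - 1) * Q x1) * (R y1 * R x2)"
    by (simp only: ac_simps)
  also have "\<dots> \<le> (P y1 * fact y1 * fact (b + x1 - 1) * Q x2) * (R y1 * R x2)"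
    by (intro mult_le_mono s1 le_refl)
  also have "\<dots> = (P y1 * Q x2) * (R y1 * fact y1 * fact (b + x1 - 1) * R x2)"
    by (simp only: ac_simps)
  finally have s2: "R y2 * fact y2 * fact (b + x2 - 1) * R x1 \<le> R y1 * fact y1 * fact (b + x1 - 1) * R x2"
    using Ppos[of y1] Qpos[of x2] by simp
  have RF: "R u * fact u = fact (u + r)" for u unfolding R_def by (rule prod_atLeast1_add_fact)
  have "fact (y2 + r) * fact (b + x2 - 1) * fact (x1 + r) * fact x2 =
        (R y2 * fact y2 * fact (b + x2 - 1) * R x1) * (fact x1 * (fact x2 :: nat))"
    unfolding RF[symmetric] by (simp only: ac_simps)
  also have "\<dots> \<le> (R y1 * fact y1 * fact (b + x1 - 1) * R x2) * (fact x1 * fact x2)"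
    by (intro mult_le_mono s2 le_refl)
  also have "\<dots> = fact (y1 + r) * fact (b + x1 - 1) * fact (x2 + r) * fact x1"
    unfolding RF[symmetric] by (simp only: ac_simps)
  finally show ?thesis .
qed

theorem hook_prod_star_strict_mono:
  assumes gm: "is_partition gm" "gm \<noteq> []"
    and x: "x1 < x2" "x1 + y1 = x2 + y2" "y2 + length gm \<le> x1"
  shows "hook_prod (star gm x1 y1) < hook_prod (star gm x2 y2)"
proof (rule ccontr)
  define b where "b = corner_hook gm"
  define r where "r = length gm - 1"
  define d where "d = x2 - x1"
  assume "\<not> ?thesis"
  then have "fact (y2 + r) * fact (b + x2 - 1) * fact (x1 + r) * fact x2 \<le>
             fact (y1 + r) * fact (b + x1 - 1) * fact (x2 + r) * (fact x1 :: nat)"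
    unfolding b_def r_def using x by (intro hook_prod_star_le_imp_fact_le[OF gm]) auto
  moreover
  have lb: "length gm \<le> b" unfolding b_def by (rule length_le_corner_hook[OF gm])
  have l0: "0 < length gm" using gm(2) by simp
  have d0: "0 < d" "x2 = x1 + d" "y1 = y2 + d" unfolding d_def using x by auto
  have FR: "fact (b + x1 - 1) * fact (x1 + r + d) \<le> fact (b + x1 - 1 + d) * (fact (x1 + r) :: nat)"
    by (rule fact_ratio_le) (use lb l0 r_def in linarith)
  have FS: "fact x1 * fact (y2 + r + d) < fact (x1 + d) * (fact (y2 + r) :: nat)"
    by (rule fact_ratio_less) (use x(3) l0 d0 r_def in linarith)+
  have e: "b + x1 - 1 + d = b + x2 - 1" "x1 + r + d = x2 + r" "y2 + r + d = y1 + r" "x1 + d = x2"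
    using d0 lb l0 by linarith+
  have "fact (y1 + r) * fact (b + x1 - 1) * fact (x2 + r) * fact x1 =
        (fact (b + x1 - 1) * fact (x1 + r + d)) * (fact x1 * (fact (y2 + r + d) :: nat))"
    unfolding e by (simp only: ac_simps)
  also have "\<dots> < (fact (b + x1 - 1 + d) * fact (x1 + r)) * (fact (x1 + d) * fact (y2 + r))"
    by (rule mult_le_less_imp_less[OF FR FS]) (simp_all add: fact_gt_zero)
  also have "\<dots> = fact (y2 + r) * fact (b + x2 - 1) * fact (x1 + r) * fact x2"
    unfolding e by (simp only: ac_simps)
  ultimately show False by simp
qed

theorem hook_prod_star_nil_strict_mono:
  assumes "0 < x1" "x1 < x2" "x1 + y1 = x2 + y2" "y1 + 1 < x1"
  shows "hook_prod (star [] x1 y1) < hook_prod (star [] x2 y2)"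
proof -
  define d where "d = x2 - x1"
  have d0: "0 < d" "x2 - 1 = (x1 - 1) + d" "y1 = y2 + d" unfolding d_def using assms by auto
  have "fact (x1 - 1) * fact (y2 + d) < fact (x1 - 1 + d) * (fact y2 :: nat)"
    by (rule fact_ratio_less) (use assms d0 in linarith)+
  then have "(x1 + y1) * fact y1 * fact (x1 - 1) < (x1 + y1) * fact y2 * fact (x2 - 1)"
    using assms d0 by (simp add: ac_simps)
  then show ?thesis using hook_prod_star_nil assms by simp
qed

section \<open>Degrees prime to \<open>p\<close>\<close>

lemma not_dvd_diff_prod:
  assumes p: "prime p" and fB: "finite B" and small: "\<forall>u\<in>B. u < p"
  shows "\<not> p dvd diff_prod B"
proof
  assume "p dvd diff_prod B"
  then obtain u where u: "u \<in> B" "p dvd (\<Prod>v\<in>{v\<in>B. v<u}. u - v)"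
    unfolding diff_prod_def using prime_dvd_prod_iff[OF fB p] by auto
  have fin: "finite {v\<in>B. v<u}" using fB by simp
  from u(2) obtain v where v: "v < u" "p dvd u - v" using prime_dvd_prod_iff[OF fin p] by auto
  then have "p \<le> u - v" by (intro dvd_imp_le) simp_all
  moreover have "u < p" using small u(1) by blast
  ultimately show False by linarith
qed

lemma char_degree_star_eq:
  assumes gm: "is_partition gm" "gm \<noteq> []"
  defines "b \<equiv> corner_hook gm" and "B \<equiv> lower_betas gm"
  shows "char_degree (star gm x y) *
           ((b + x + y) * (\<Prod>c\<in>B. c + y) * (\<Prod>j\<in>{1..b - 1}. j + x) * (\<Prod>c\<in>B. fact (c - 1))) =
         ((x + y) choose x) * (\<Prod>j\<in>{1..sum_list gm}. j + (x + y)) * (diff_prod B * (\<Prod>c\<in>B. b - c + x))"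
proof -
  define D where "D = char_degree (star gm x y)"
  define H where "H = hook_prod (star gm x y)"
  define P where "P = (\<Prod>c\<in>B. c + y)"
  define Q where "Q = (\<Prod>c\<in>B. b - c + x)"
  define FB where "FB = (\<Prod>c\<in>B. fact (c - 1) :: nat)"
  define W where "W = (\<Prod>j\<in>{1..b - 1}. j + x)"
  define V where "V = (\<Prod>j\<in>{1..sum_list gm}. j + (x + y))"
  have b1: "1 \<le> b" using length_le_corner_hook[OF gm] gm(2) unfolding b_def by (cases gm) auto
  have exact: "D * H = fact (sum_list gm + (x + y))"
    unfolding D_def H_def
      using char_degree_mult_hook_prod[OF star_partition[OF gm], of x y] star_sum[OF gm]
    by (simp add: add.assoc)
  have hp: "H * diff_prod B * Q = (b + x + y) * P * fact y * fact (b + x - 1) * FB"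
    unfolding H_def P_def Q_def FB_def b_def B_def by (rule hook_prod_star[OF gm])
  have fbx: "fact (b + x - 1) = W * fact x"
    unfolding W_def using prod_atLeast1_add_fact[where r="b - 1" and u=x] b1
      by (simp add: add.commute)
  have fn: "fact (sum_list gm + (x + y)) = V * fact (x + y)"
    unfolding V_def using prod_atLeast1_add_fact[where r="sum_list gm" and u="x + y"]
      by (simp add: add.commute)
  have fN: "fact (x + y) = fact x * fact y * ((x + y) choose x)"
    using binomial_fact_lemma[of x "x + y"] by simp
  have "D * ((b + x + y) * P * W * FB) * (fact x * fact y) =
      D * ((b + x + y) * P * fact y * fact (b + x - 1) * FB)"
    unfolding fbx by (simp only: ac_simps)
  also have "\<dots> = D * H * (diff_prod B * Q)" unfolding hp[symmetric] by (simp only: ac_simps)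
  also have "\<dots> = ((x + y) choose x) * V * (diff_prod B * Q) * (fact x * fact y)"
    unfolding exact fn fN by (simp only: ac_simps)
  finally have "D * ((b + x + y) * P * W * FB) = ((x + y) choose x) * V * (diff_prod B * Q)" by simp
  then show ?thesis unfolding D_def P_def W_def FB_def V_def Q_def .
qed

theorem not_dvd_char_degree_star:
  assumes p: "prime p" and gm: "is_partition gm" "gm \<noteq> []" "sum_list gm < p"
    and xy: "p dvd x" "p dvd y" "\<not> p dvd ((x + y) choose x)"
  shows "\<not> p dvd char_degree (star gm x y)"
proof
  assume dvd: "p dvd char_degree (star gm x y)"
  define b where "b = corner_hook gm"
  define B where "B = lower_betas gm"
  have B: "1 \<le> c \<and> c < b" if "c \<in> B" for c using lower_betas_bounds[OF gm(1,2)] that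
    unfolding B_def b_def by auto
  have bp: "b < p" using corner_hook_le_sum_list[OF gm(1,2)] gm(3) unfolding b_def by linarith
  have "p dvd char_degree (star gm x y) *
      ((b + x + y) * (\<Prod>c\<in>B. c + y) * (\<Prod>j\<in>{1..b - 1}. j + x) * (\<Prod>c\<in>B. fact (c - 1)))"
    using dvd by simp
  also have "\<dots> = ((x + y) choose x) * (\<Prod>j\<in>{1..sum_list gm}. j + (x + y)) * (diff_prod B * (\<Prod>c\<in>B. b - c + x))"
    unfolding b_def B_def by (rule char_degree_star_eq[OF gm(1,2)])
  finally have "p dvd ((x + y) choose x) * (\<Prod>j\<in>{1..sum_list gm}. j + (x + y)) * (diff_prod B * (\<Prod>c\<in>B. b - c + x))" .
  moreover have "\<not> p dvd (\<Prod>j\<in>{1..sum_list gm}. j + (x + y))"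
  proof
    assume "p dvd (\<Prod>j\<in>{1..sum_list gm}. j + (x + y))"
    then have "\<exists>j\<in>{1..sum_list gm}. p dvd j + (x + y)"
      by (simp only: prime_dvd_prod_iff[OF finite_atLeastAtMost p])
    then obtain j where j: "j \<in> {1..sum_list gm}" "p dvd j + (x + y)" ..
    then have "p dvd j" using xy by (simp add: dvd_add_left_iff)
    then show False using j gm(3) by (auto dest: dvd_imp_le)
  qed
  moreover have "\<not> p dvd diff_prod B"
  proof (rule not_dvd_diff_prod[OF p])
    show "finite B" unfolding B_def by (rule finite_lower_betas)
    show "\<forall>u\<in>B. u < p" using B bp by fastforce
  qed
  moreover have "\<not> p dvd (\<Prod>c\<in>B. b - c + x)"
  proof
    assume "p dvd (\<Prod>c\<in>B. b - c + x)"
    then obtain c where c: "c \<in> B" "p dvd b - c + x"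
      using prime_dvd_prod_iff[OF finite_lower_betas p] unfolding B_def by auto
    then have "p dvd b - c" using xy by (metis dvd_add_left_iff)
    moreover have "0 < b - c" "b - c < p" using B[OF c(1)] bp by linarith+
    ultimately show False by (auto dest: dvd_imp_le)
  qed
  ultimately show False using xy(3) p by (simp add: prime_dvd_mult_iff)
qed

lemma char_degree_star_nil:
  assumes x: "0 < x"
  shows "char_degree (star [] x y) = (x + y - 1) choose y"
proof -
  have sp: "is_partition (star [] x y)" using star_nil[OF x] star_partition[OF is_partition_single]
    by simp
  have ss: "sum_list (star [] x y) = x + y" using star_nil[OF x] star_sum[OF is_partition_single] x
    by simp
  have "char_degree (star [] x y) * ((x + y) * fact y * fact (x - 1)) = fact (x + y)"
    using char_degree_mult_hook_prod[OF sp] hook_prod_star_nil[OF x] ss by simp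
  also have "fact (x + y) = (x + y) * (fact (x + y - 1) :: nat)" using x by (cases "x + y") auto
  also have "fact (x + y - 1) = fact y * fact (x - 1) * ((x + y - 1) choose y)"
    using binomial_fact_lemma[of y "x + y - 1"] x by (simp add: ac_simps)
  finally have "char_degree (star [] x y) * ((x + y) * fact y * fact (x - 1)) =
                ((x + y - 1) choose y) * ((x + y) * fact y * fact (x - 1))"
    by (simp only: ac_simps)
  moreover have "(x + y) * fact y * fact (x - 1) \<noteq> 0" using x by simp
  ultimately show ?thesis by (metis mult_right_cancel)
qed

section \<open>Base-\<open>p\<close> digits\<close>

lemma sum_max_digits: "(\<Sum>i<j. (p - 1) * p^i) = p^j - (1::nat)" if "1 \<le> p"
proof (induction j)
  case 0 then show ?case by simp
next
  case (Suc j)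
  have t: "p^j \<ge> 1" using that by simp
  have "p * p^j \<ge> p^j" using that by simp
  moreover have "(p - 1) * p^j = p * p^j - p^j" by (simp add: diff_mult_distrib)
  ultimately have "p^j - 1 + (p - 1) * p^j = p * p^j - 1" using t by linarith
  then show ?case using Suc by simp
qed

lemma digit_sum_less:
  assumes "\<forall>i\<in>A. c i < (p::nat)" "A \<subseteq> {..<j}" "0 < p"
  shows "(\<Sum>i\<in>A. c i * p^i) < p^j"
proof -
  have p1: "1 \<le> p" using assms(3) by simp
  have "(\<Sum>i\<in>A. c i * p^i) \<le> (\<Sum>i\<in>A. (p - 1) * p^i)"
    by (rule sum_mono) (use assms(1) in \<open>auto intro: mult_le_mono1\<close>)
  also have "\<dots> \<le> (\<Sum>i<j. (p - 1) * p^i)"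
    by (rule sum_mono2) (use assms(2) in auto)
  also have "\<dots> = p^j - 1" by (rule sum_max_digits[OF p1])
  also have "\<dots> < p^j" using p1 by simp
  finally show ?thesis .
qed

lemma digit_sum_mod:
  assumes "finite A" "\<forall>i\<in>A. c i < (p::nat)" "0 < p"
  shows "(\<Sum>i\<in>A. c i * p^i) mod p^j = (\<Sum>i\<in>{i\<in>A. i < j}. c i * p^i)"
proof -
  have A: "A = {i\<in>A. i < j} \<union> {i\<in>A. \<not> i < j}" by auto
  have split: "(\<Sum>i\<in>A. c i * p^i) = (\<Sum>i\<in>{i\<in>A. i < j}. c i * p^i) + (\<Sum>i\<in>{i\<in>A. \<not> i < j}. c i * p^i)"
    by (subst A, rule sum.union_disjoint) (use assms(1) in auto)
  have d: "p^j dvd (\<Sum>i\<in>{i\<in>A. \<not> i < j}. c i * p^i)"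
    by (rule dvd_sum) (auto simp: le_imp_power_dvd not_less)
  have l: "(\<Sum>i\<in>{i\<in>A. i < j}. c i * p^i) < p^j" by (rule digit_sum_less) (use assms(2,3) in auto)
  obtain t where t: "(\<Sum>i\<in>{i\<in>A. \<not> i < j}. c i * p^i) = p^j * t" using d by (auto elim!: dvdE)
  show ?thesis unfolding split t using l by simp
qed

lemma diff_mod_no_borrow:
  assumes "x \<le> (N::nat)" "x mod q \<le> N mod q"
  shows "(N - x) mod q = N mod q - x mod q"
proof (cases "q = 0")
  case True then show ?thesis by simp
next
  case False
  have "N = x + (N - x)" using assms(1) by simp
  have "N div q = x div q + (N - x) div q" by (rule div_add_no_carry) (use assms False in auto)
  moreover have "N = q * (N div q) + N mod q" "x =
      q * (x div q) + x mod q" "N - x = q * ((N - x) div q) + (N - x) mod q"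
    by simp_all
  ultimately show ?thesis using assms(1)
    by (metis add_diff_cancel_left' diff_add_inverse2 diff_diff_left distrib_left)
qed

lemma diff_1_mod:
  assumes "1 \<le> y mod (q::nat)"
  shows "(y - 1) mod q = y mod q - 1"
proof (cases "q = 0")
  case True then show ?thesis by simp
next
  case False
  then have q: "0 < q" by simp
  have "y = q * (y div q) + y mod q" by simp
  then have "y - 1 = q * (y div q) + (y mod q - 1)" using assms by linarith
  moreover have "y mod q - 1 < q" using q by (simp add: less_imp_diff_less)
  ultimately show ?thesis by (metis mod_mult_self2 mod_less add.commute)
qed

lemma diff_1_mod_dvd:
  assumes "q dvd (N::nat)" "1 \<le> N" "0 < q"
  shows "(N - 1) mod q = q - 1"
proof -
  obtain t where t: "N = q * t" using assms(1) by blast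
  then have "1 \<le> t" using assms(2) by (cases t) auto
  then have eq: "N - 1 = q * (t - 1) + (q - 1)" using t assms(3)
    by (cases t) (auto simp: algebra_simps)
  have "(N - 1) mod q = (q * (t - 1) + (q - 1)) mod q" unfolding eq ..
  also have "\<dots> = (q - 1) mod q" by (rule mod_mult_self4)
  also have "\<dots> = q - 1" using assms(3) by simp
  finally show ?thesis .
qed

section \<open>Distinct degrees on \<open>\<Omega>\<close>\<close>

lemma Omega_setD:
  assumes "la \<in> Omega_set p n gm"
  shows "is_partition la" "sum_list la = n" "\<not> p dvd char_degree la" "(remove_hook p)\<^sup>*\<^sup>* la gm"
    "\<exists>x\<le>n - n mod p. la = star gm x (n - n mod p - x)" "first_part_conj la < first_part la"
  using assms unfolding Omega_set_def H_set_def partition_of_def is_p_core_of_def by auto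

lemma Omega_setI:
  assumes "partition_of la n" "\<not> p dvd char_degree la" "is_p_core_of p la gm"
    and "x \<le> n - n mod p" "la = star gm x (n - n mod p - x)" "first_part_conj la < first_part la"
  shows "la \<in> Omega_set p n gm"
  using assms unfolding Omega_set_def H_set_def by auto

text \<open>For \<open>gm \<noteq> []\<close> the arms of members of \<open>\<Omega>\<close> are multiples of \<open>p > sum_list gm\<close>, which
  provides the gap required by \<open>hook_prod_star_strict_mono\<close>.\<close>

lemma hook_prod_Omega_less:
  assumes p: "prime p" and gm: "is_partition gm" "sum_list gm < p" and Np: "p \<le> N"
    and l1: "star gm x1 (N - x1) \<in> Omega_set p n gm" and l2: "star gm x2 (N - x2) \<in> Omega_set p n gm"
    and x: "x1 < x2" "x2 \<le> N"
  shows "hook_prod (star gm x1 (N - x1)) < hook_prod (star gm x2 (N - x2))"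
proof (cases "gm = []")
  case False
  have d1: "p dvd x1" by (rule remove_hooks_star_dvd_arm[OF p gm(1) False gm(2) Omega_setD(4)[OF l1]])
  have d2: "p dvd x2" by (rule remove_hooks_star_dvd_arm[OF p gm(1) False gm(2) Omega_setD(4)[OF l2]])
  have "p dvd x2 - x1" by (rule dvd_diff_nat[OF d2 d1])
  then have dp: "p \<le> x2 - x1" using x by (intro dvd_imp_le) auto
  have reg: "length gm + (N - x1) < gm!0 + x1"
    using Omega_setD(6)[OF l1] star_first_part[OF gm(1) False] star_first_part_conj[OF gm(1) False]
      by simp
  have g1: "gm!0 \<le> sum_list gm" by (rule hd_le_sum_list[OF False])
  show ?thesis
    by (rule hook_prod_star_strict_mono[OF gm(1) False x(1)]) (use x reg g1 gm(2) dp in linarith)+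
next
  case True
  have x10: "0 < x1"
  proof (rule ccontr)
    assume "\<not> 0 < x1"
    then have "x1 = 0" by simp
    then have "star gm x1 (N - x1) = replicate N 1" using True star_nil_0 by simp
    moreover have "N > 1" using Np prime_ge_2_nat[OF p] by simp
    ultimately show False using Omega_setD(6)[OF l1] first_part_conj_replicate first_part_replicate
      by simp
  qed
  have reg: "1 + (N - x1) < x1"
    using Omega_setD(6)[OF l1] True first_part_star_nil[OF x10] first_part_conj_star_nil[OF x10]
      by simp
  show ?thesis unfolding True
    by (rule hook_prod_star_nil_strict_mono[OF x10 x(1)]) (use x reg in linarith)+
qed

lemma inj_on_char_degree_Omega:
  assumes p: "prime p" and gm: "is_partition gm" "sum_list gm < p" and Np: "p \<le> n - n mod p"
  shows "inj_on char_degree (Omega_set p n gm)"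
proof (rule inj_onI, rule ccontr)
  define N where "N = n - n mod p"
  fix la1 la2 assume l1: "la1 \<in> Omega_set p n gm" and l2: "la2 \<in> Omega_set p n gm"
    and eq: "char_degree la1 = char_degree la2" and ne: "la1 \<noteq> la2"
  obtain x1 where x1: "x1 \<le> N" "la1 = star gm x1 (N - x1)" using Omega_setD(5)[OF l1]
    unfolding N_def by blast
  obtain x2 where x2: "x2 \<le> N" "la2 = star gm x2 (N - x2)" using Omega_setD(5)[OF l2]
    unfolding N_def by blast
  have ex1: "char_degree la1 * hook_prod la1 = fact n"
    using char_degree_mult_hook_prod[OF Omega_setD(1)[OF l1]] Omega_setD(2)[OF l1] by simp
  have ex2: "char_degree la2 * hook_prod la2 = fact n"
    using char_degree_mult_hook_prod[OF Omega_setD(1)[OF l2]] Omega_setD(2)[OF l2] by simp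
  have "hook_prod la1 \<noteq> hook_prod la2"
  proof (cases "x1 < x2")
    case True
    have "hook_prod la1 < hook_prod la2" unfolding x1(2) x2(2)
      by (rule hook_prod_Omega_less[OF p gm _ _ _ True x2(1)]) (use Np l1 l2 x1 x2 in \<open>simp_all add: N_def\<close>)
    then show ?thesis by simp
  next
    case False
    then have "x2 < x1" using ne x1 x2 by (cases "x1 = x2") auto
    have "hook_prod la2 < hook_prod la1" unfolding x1(2) x2(2)
      by (rule hook_prod_Omega_less[OF p gm _ _ _ \<open>x2 < x1\<close> x1(1)]) (use Np l1 l2 x1 x2 in \<open>simp_all add: N_def\<close>)
    then show ?thesis by simp
  qed
  moreover have c0: "char_degree la1 \<noteq> 0" using ex1 by (metis fact_nonzero mult_eq_0_iff)
  moreover have "char_degree la1 * hook_prod la1 = char_degree la1 * hook_prod la2" using ex1 ex2 eq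
    by simp
  ultimately show False using mult_left_cancel[OF c0] by blast
qed

section \<open>A large subset of \<open>\<Omega>\<close>\<close>

locale p_adic_digits =
  fixes p k :: nat and a :: "nat \<Rightarrow> nat"
  assumes prime: "prime p" and k_pos: "1 \<le> k"
    and digits_less: "\<forall>i\<le>k. a i < p" and top_digit_nonzero: "a k \<noteq> 0"
begin

definition high_part :: nat where
  "high_part = (\<Sum>i\<in>{1..k}. a i * p^i)"

definition digit_choices :: "(nat \<Rightarrow> nat) set" where
  "digit_choices = PiE {1..k} (\<lambda>i. if i = k then {j. a k < 2 * j \<and> j \<le> a k} else {..a i})"

definition digit_value :: "(nat \<Rightarrow> nat) \<Rightarrow> nat" where
  "digit_value z = (\<Sum>i\<in>{1..k}. z i * p^i)"

lemma p_pos: "0 < p"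
  using prime prime_gt_0_nat by blast

lemma sum_digits_eq: "(\<Sum>i\<le>k. a i * p^i) = a 0 + high_part"
proof -
  have "{..k} = insert 0 {1..k}" by auto
  then show ?thesis unfolding high_part_def by simp
qed

lemma card_digit_choices: "card digit_choices = ((a k + 1) div 2) * (\<Prod>i\<in>{1..k-1}. (a i + 1))"
proof -
  let ?C = "\<lambda>i. if i = k then {j. a k < 2 * j \<and> j \<le> a k} else {..a i}"
  have "card digit_choices = (\<Prod>i\<in>{1..k}. card (?C i))"
    unfolding digit_choices_def by (rule card_PiE) simp
  also have "{1..k} = insert k {1..k-1}" using k_pos by auto
  also have "(\<Prod>i\<in>insert k {1..k-1}. card (?C i)) = card (?C k) * (\<Prod>i\<in>{1..k-1}. card (?C i))"
    using k_pos by simp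
  also have "(\<Prod>i\<in>{1..k-1}. card (?C i)) = (\<Prod>i\<in>{1..k-1}. a i + 1)"
    by (rule prod.cong) auto
  also have "?C k = {a k div 2 + 1..a k}" by auto
  finally show ?thesis by simp
qed

lemma digit_choices_bounds:
  assumes "z \<in> digit_choices"
  shows "\<forall>i\<in>{1..k}. z i \<le> a i" "\<forall>i\<in>{1..k}. z i < p" "a k < 2 * z k"
proof -
  show le: "\<forall>i\<in>{1..k}. z i \<le> a i"
    using assms unfolding digit_choices_def by (auto simp: PiE_iff split: if_splits)
  show "\<forall>i\<in>{1..k}. z i < p" using le digits_less by (meson atLeastAtMost_iff le_less_trans)
  have "z k \<in> {j. a k < 2 * j \<and> j \<le> a k}"
    using PiE_mem[OF assms[unfolded digit_choices_def], of k] k_pos by simp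
  then show "a k < 2 * z k" by simp
qed

lemma high_part_mod: "high_part mod p^j = (\<Sum>i\<in>{i\<in>{1..k}. i < j}. a i * p^i)"
  unfolding high_part_def by (rule digit_sum_mod) (use digits_less p_pos in auto)

lemma digit_value_mod:
  "z \<in> digit_choices \<Longrightarrow> digit_value z mod p^j = (\<Sum>i\<in>{i\<in>{1..k}. i < j}. z i * p^i)"
  unfolding digit_value_def by (rule digit_sum_mod[OF _ digit_choices_bounds(2) p_pos]) simp_all

lemma digit_value_mod_le: "z \<in> digit_choices \<Longrightarrow> digit_value z mod p^j \<le> high_part mod p^j"
  unfolding digit_value_mod high_part_mod using digit_choices_bounds(1)
  by (intro sum_mono mult_le_mono1) auto

lemma digit_value_le: "z \<in> digit_choices \<Longrightarrow> digit_value z \<le> high_part"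
  unfolding digit_value_def high_part_def using digit_choices_bounds(1)
  by (intro sum_mono mult_le_mono1) auto

lemma dvd_high_part: "p dvd high_part"
  unfolding high_part_def by (rule dvd_sum) (auto intro: dvd_mult dvd_power)

lemma dvd_digit_value: "p dvd digit_value z"
  unfolding digit_value_def by (rule dvd_sum) (auto intro: dvd_mult dvd_power)

lemma top_digit_le_digit_value:
  assumes "z \<in> digit_choices"
  shows "z k * p^k \<le> digit_value z"
  unfolding digit_value_def using k_pos by (intro member_le_sum) auto

lemma digit_value_pos:
  assumes "z \<in> digit_choices"
  shows "0 < digit_value z"
proof -
  have "0 < z k * p^k" using digit_choices_bounds(3)[OF assms] p_pos by simp
  then show ?thesis using top_digit_le_digit_value[OF assms] by linarith
qed

text \<open>Since \<open>z k > a k / 2\<close>, the complement \<open>high_part - digit_value z\<close> is smaller than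
  \<open>digit_value z\<close>; both being multiples of \<open>p\<close>, it is even smaller by at least \<open>p\<close>.\<close>

lemma digit_value_large:
  assumes "z \<in> digit_choices"
  shows "high_part - digit_value z + p \<le> digit_value z"
proof -
  note zp = digit_choices_bounds[OF assms]
  have kk: "{1..k} = insert k {1..k-1}" "k \<notin> {1..k-1}" using k_pos by auto
  have "high_part - digit_value z = (\<Sum>i\<in>{1..k}. (a i - z i) * p^i)"
    unfolding high_part_def digit_value_def using zp(1)
    by (subst sum_subtractf_nat[symmetric]) (auto simp: diff_mult_distrib)
  also have "\<dots> = (a k - z k) * p^k + (\<Sum>i\<in>{1..k-1}. (a i - z i) * p^i)"
    unfolding kk(1) using kk(2) by simp
  also have "(\<Sum>i\<in>{1..k-1}. (a i - z i) * p^i) < p^k"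
  proof (rule digit_sum_less)
    show "\<forall>i\<in>{1..k-1}. a i - z i < p"
    proof
      fix i assume "i \<in> {1..k-1}"
      then have "a i < p" using digits_less by auto
      then show "a i - z i < p" by linarith
    qed
  qed (use p_pos in auto)
  finally have "high_part - digit_value z < (a k - z k + 1) * p^k" by (simp add: algebra_simps)
  also have "\<dots> \<le> z k * p^k" using zp(3) zp(1) k_pos by (intro mult_le_mono1) auto
  also have "\<dots> \<le> digit_value z" by (rule top_digit_le_digit_value[OF assms])
  finally have lt: "high_part - digit_value z < digit_value z" .
  have "p dvd digit_value z - (high_part - digit_value z)"
    using dvd_digit_value dvd_high_part by (intro dvd_diff_nat) auto
  then have "p \<le> digit_value z - (high_part - digit_value z)" using lt by (intro dvd_imp_le) auto
  then show ?thesis using lt by linarith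
qed

lemma inj_on_digit_value: "inj_on digit_value digit_choices"
proof (rule inj_onI)
  fix z1 z2 assume z1: "z1 \<in> digit_choices" and z2: "z2 \<in> digit_choices"
    and eq: "digit_value z1 = digit_value z2"
  have digit: "z i = (digit_value z mod p^(Suc i) - digit_value z mod p^i) div p^i"
    if "z \<in> digit_choices" "i \<in> {1..k}" for z i
  proof -
    have "{l\<in>{1..k}. l < Suc i} = insert i {l\<in>{1..k}. l < i}" using that(2) by auto
    then have "digit_value z mod p^(Suc i) = z i * p^i + digit_value z mod p^i"
      unfolding digit_value_mod[OF that(1)] by simp
    then show ?thesis using p_pos by simp
  qed
  show "z1 = z2"
  proof (rule PiE_ext)
    show "z1 \<in> Pi\<^sub>E {1..k} (\<lambda>i. if i = k then {j. a k < 2 * j \<and> j \<le> a k} else {..a i})"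
      using z1 unfolding digit_choices_def .
    show "z2 \<in> Pi\<^sub>E {1..k} (\<lambda>i. if i = k then {j. a k < 2 * j \<and> j \<le> a k} else {..a i})"
      using z2 unfolding digit_choices_def .
    fix i assume "i \<in> {1..k}"
    then show "z1 i = z2 i" using digit[OF z1] digit[OF z2] eq by metis
  qed
qed

lemma star_digit_value_in_Omega:
  assumes gm: "is_partition gm" "gm \<noteq> []" "sum_list gm = a 0"
    and z: "z \<in> digit_choices"
  shows "star gm (digit_value z) (high_part - digit_value z) \<in> Omega_set p (a 0 + high_part) gm"
proof -
  let ?N = "high_part" and ?X = "digit_value z"
  let ?la = "star gm ?X (?N - ?X)"
  have XN: "?X \<le> ?N" by (rule digit_value_le[OF z])
  have dX: "p dvd ?X" by (rule dvd_digit_value)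
  have dY: "p dvd ?N - ?X" by (rule dvd_diff_nat[OF dvd_high_part dX])
  have small: "sum_list gm < p" using gm(3) digits_less by simp
  have n: "(a 0 + ?N) mod p = a 0" "a 0 + ?N - (a 0 + ?N) mod p = ?N"
    using dvd_high_part digits_less by auto
  show ?thesis
  proof (rule Omega_setI)
    show "partition_of ?la (a 0 + ?N)"
      unfolding partition_of_def using star_partition[OF gm(1,2)] star_sum[OF gm(1,2)] XN gm(3)
        by simp
    have "\<not> p dvd (?N choose ?X)"
      by (rule kummer_not_dvd_choose[OF prime XN]) (use digit_value_mod_le[OF z] in auto)
    then show "\<not> p dvd char_degree ?la"
      using not_dvd_char_degree_star[OF prime gm(1,2) small dX dY] XN by simp
    show "is_p_core_of p ?la gm"
      unfolding is_p_core_of_def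
      using remove_hooks_star_to_core[OF gm(1,2) p_pos dX dY] no_remove_hook_small[OF small] by simp
    show "?X \<le> a 0 + ?N - (a 0 + ?N) mod p" "?la = star gm ?X (a 0 + ?N - (a 0 + ?N) mod p - ?X)"
      using XN n by simp_all
    show "first_part_conj ?la < first_part ?la"
      unfolding star_first_part[OF gm(1,2)] star_first_part_conj[OF gm(1,2)]
      using digit_value_large[OF z] length_le_sum_list[OF gm(1)] small by linarith
  qed
qed

definition low_digit :: nat where
  "low_digit = (LEAST i. 1 \<le> i \<and> a i \<noteq> 0)"

lemma low_digit_props:
  "1 \<le> low_digit" "low_digit \<le> k" "a low_digit \<noteq> 0" "\<And>i. 1 \<le> i \<Longrightarrow> i < low_digit \<Longrightarrow> a i = 0"
proof -
  have ex: "1 \<le> k \<and> a k \<noteq> 0" using k_pos top_digit_nonzero by simp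
  show "1 \<le> low_digit" "a low_digit \<noteq> 0"
    using LeastI[of "\<lambda>i. 1 \<le> i \<and> a i \<noteq> 0", OF ex] unfolding low_digit_def by auto
  show "low_digit \<le> k" unfolding low_digit_def by (rule Least_le) (rule ex)
  fix i assume "1 \<le> i" "i < low_digit"
  then show "a i = 0" using not_less_Least[of i "\<lambda>i. 1 \<le> i \<and> a i \<noteq> 0"] unfolding low_digit_def
    by auto
qed

lemma low_digit_term_pos: "0 < a low_digit * p^low_digit"
  using low_digit_props(3) p_pos by simp

lemma high_part_pos: "0 < high_part"
  unfolding high_part_def using low_digit_props(1,2) low_digit_term_pos
  by (intro ordered_comm_monoid_add_class.sum_pos2[of _ low_digit]) auto

lemma high_part_mod_low: "j \<le> low_digit \<Longrightarrow> high_part mod p^j = 0"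
  unfolding high_part_mod using low_digit_props(4) by (intro sum.neutral) auto

lemma high_part_mod_high: "low_digit < j \<Longrightarrow> a low_digit * p^low_digit \<le> high_part mod p^j"
  unfolding high_part_mod using low_digit_props(1,2) by (intro member_le_sum) auto

lemma digit_sum_gap:
  assumes z: "z \<in> digit_choices" and S: "low_digit \<in> S" "S \<subseteq> {1..k}" and z0: "z low_digit = 0"
  shows "(\<Sum>i\<in>S. z i * p^i) + a low_digit * p^low_digit \<le> (\<Sum>i\<in>S. a i * p^i)"
proof -
  have fS: "finite S" using S(2) finite_subset by blast
  have "(\<Sum>i\<in>S. z i * p^i) = (\<Sum>i\<in>S - {low_digit}. z i * p^i)"
    using sum.remove[OF fS S(1), of "\<lambda>i. z i * p^i"] z0 by simp
  also have "\<dots> \<le> (\<Sum>i\<in>S - {low_digit}. a i * p^i)"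
    using digit_choices_bounds(1)[OF z] S(2) by (intro sum_mono mult_le_mono1) auto
  finally show ?thesis using sum.remove[OF fS S(1), of "\<lambda>i. a i * p^i"] by simp
qed

text \<open>If the digit of \<open>z\<close> at the lowest nonzero position of \<open>high_part\<close> vanishes, the
  complement \<open>high_part - digit_value z\<close> has a nonzero digit there, so subtracting one more
  causes no borrow beyond that position; this keeps the binomial coefficient below prime to \<open>p\<close>.\<close>

definition low_digit_fix :: "(nat \<Rightarrow> nat) \<Rightarrow> nat" where
  "low_digit_fix z = (if z low_digit = 0 then 1 else 0)"

lemma digit_value_fix_le:
  assumes z: "z \<in> digit_choices"
  shows "digit_value z + low_digit_fix z \<le> high_part"
proof (cases "z low_digit = 0")
  case True
  have "digit_value z + a low_digit * p^low_digit \<le> high_part"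
    unfolding digit_value_def high_part_def
    by (rule digit_sum_gap[OF z _ _ True]) (use low_digit_props(1,2) in auto)
  then have "digit_value z + 1 \<le> high_part" using low_digit_term_pos by linarith
  then show ?thesis using True by (simp add: low_digit_fix_def)
qed (use digit_value_le[OF z] in \<open>simp add: low_digit_fix_def\<close>)

lemma high_part_minus_1_mod:
  "(high_part - 1) mod p^j = (if j \<le> low_digit then p^j - 1 else high_part mod p^j - 1)"
proof (cases "j \<le> low_digit")
  case True
  have "p^j dvd high_part" using high_part_mod_low[OF True] by (simp add: dvd_eq_mod_eq_0)
  then show ?thesis using True high_part_pos p_pos diff_1_mod_dvd[of "p^j" high_part] by simp
next
  case False
  then have "a low_digit * p^low_digit \<le> high_part mod p^j" by (simp add: high_part_mod_high)
  then have "1 \<le> high_part mod p^j" using low_digit_term_pos by linarith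
  then show ?thesis using False diff_1_mod by simp
qed

lemma not_dvd_choose_fixed:
  assumes z: "z \<in> digit_choices"
  shows "\<not> p dvd ((high_part - 1) choose (high_part - (digit_value z + low_digit_fix z)))"
proof (rule kummer_not_dvd_choose[OF prime])
  let ?X = "digit_value z" and ?f = "low_digit_fix z"
  show "high_part - (?X + ?f) \<le> high_part - 1" using digit_value_pos[OF z] by simp
  show "\<forall>j. (high_part - (?X + ?f)) mod p^j \<le> (high_part - 1) mod p^j"
  proof
    fix j
    have pj: "0 < p^j" using p_pos by simp
    show "(high_part - (?X + ?f)) mod p^j \<le> (high_part - 1) mod p^j"
    proof (cases "j \<le> low_digit")
      case True
      have "(high_part - (?X + ?f)) mod p^j < p^j" using pj by simp
      then show ?thesis using True high_part_minus_1_mod[of j] by simp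
    next
      case False
      have compl: "(high_part - ?X) mod p^j = high_part mod p^j - ?X mod p^j"
        by (rule diff_mod_no_borrow[OF digit_value_le[OF z] digit_value_mod_le[OF z]])
      have low: "low_digit \<in> {i\<in>{1..k}. i < j}" using low_digit_props(1,2) False by auto
      show ?thesis
      proof (cases "z low_digit = 0")
        case False
        have "z low_digit * p^low_digit \<le> ?X mod p^j"
          unfolding digit_value_mod[OF z] by (rule member_le_sum[OF low]) auto
        moreover have "0 < z low_digit * p^low_digit" using False p_pos by simp
        ultimately have "1 \<le> ?X mod p^j" by linarith
        then show ?thesis
          using compl high_part_minus_1_mod[of j] \<open>\<not> j \<le> low_digit\<close> False
          by (simp add: low_digit_fix_def)
      next
        case True
        have "a low_digit * p^low_digit \<le> high_part mod p^j - ?X mod p^j"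
          using digit_sum_gap[OF z low _ True]
          unfolding high_part_mod digit_value_mod[OF z] by fastforce
        then have "1 \<le> (high_part - ?X) mod p^j" using compl low_digit_term_pos by linarith
        then have "(high_part - (?X + ?f)) mod p^j = (high_part - ?X) mod p^j - 1"
          using True diff_1_mod[of "high_part - ?X" "p^j"] by (simp add: low_digit_fix_def)
        then show ?thesis using compl high_part_minus_1_mod[of j] \<open>\<not> j \<le> low_digit\<close> by simp
      qed
    qed
  qed
qed

lemma inj_on_digit_value_fix: "inj_on (\<lambda>z. digit_value z + low_digit_fix z) digit_choices"
proof (rule inj_onI)
  fix z1 z2 assume z1: "z1 \<in> digit_choices" and z2: "z2 \<in> digit_choices"
    and eq: "digit_value z1 + low_digit_fix z1 = digit_value z2 + low_digit_fix z2"
  have "(digit_value z + low_digit_fix z) mod p = low_digit_fix z" for z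
  proof -
    obtain t where "digit_value z = p * t" using dvd_digit_value by blast
    moreover have "low_digit_fix z < p"
      using prime_ge_2_nat[OF prime] unfolding low_digit_fix_def by auto
    ultimately show ?thesis by simp
  qed
  then have "low_digit_fix z1 = low_digit_fix z2" using eq by metis
  then have "digit_value z1 = digit_value z2" using eq by simp
  then show "z1 = z2" using inj_on_digit_value z1 z2 by (meson inj_onD)
qed

lemma star_nil_digit_value_in_Omega:
  assumes z: "z \<in> digit_choices"
  shows "star [] (digit_value z + low_digit_fix z) (high_part - (digit_value z + low_digit_fix z))
           \<in> Omega_set p high_part []"
proof -
  let ?N = "high_part" and ?x = "digit_value z + low_digit_fix z"
  let ?la = "star [] ?x (?N - ?x)"
  have xN: "?x \<le> ?N" by (rule digit_value_fix_le[OF z])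
  have x0: "0 < ?x" using digit_value_pos[OF z] by simp
  have n: "?N mod p = 0" using dvd_high_part by simp
  show ?thesis
  proof (rule Omega_setI)
    have "sum_list ?la = Suc (?x - 1 + (?N - ?x))"
      using star_nil[OF x0] star_sum[OF is_partition_single] by simp
    then show "partition_of ?la ?N"
      unfolding partition_of_def using star_nil[OF x0] star_partition[OF is_partition_single] x0 xN
      by simp
    show "\<not> p dvd char_degree ?la"
      using char_degree_star_nil[OF x0] not_dvd_choose_fixed[OF z] xN by simp
    show "is_p_core_of p ?la []"
      unfolding is_p_core_of_def
      using remove_hooks_star_nil_to_empty[OF p_pos x0] dvd_high_part xN no_remove_hook_small[of "[]" p] p_pos
      by simp
    show "?x \<le> ?N - ?N mod p" "?la = star [] ?x (?N - ?N mod p - ?x)" using xN n by simp_all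
    show "first_part_conj ?la < first_part ?la"
      unfolding first_part_star_nil[OF x0] first_part_conj_star_nil[OF x0]
      using digit_value_large[OF z] prime_ge_2_nat[OF prime] by linarith
  qed
qed

lemma card_digit_choices_le_Omega:
  assumes gm: "is_partition gm" "sum_list gm = a 0"
  shows "card digit_choices \<le> card (Omega_set p (a 0 + high_part) gm)"
proof -
  let ?n = "a 0 + high_part"
  have "Omega_set p ?n gm \<subseteq> (\<lambda>x. star gm x (?n - ?n mod p - x)) ` {..?n - ?n mod p}"
    using Omega_setD(5) by blast
  then have fin: "finite (Omega_set p ?n gm)" by (rule finite_subset) simp
  obtain f where f: "inj_on f digit_choices" "f ` digit_choices \<subseteq> Omega_set p ?n gm"
  proof (cases "gm = []")
    case False
    show ?thesis
    proof (rule that)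
      show "(\<lambda>z. star gm (digit_value z) (high_part - digit_value z)) ` digit_choices \<subseteq> Omega_set p ?n gm"
        using star_digit_value_in_Omega[OF gm(1) False gm(2)] by blast
      show "inj_on (\<lambda>z. star gm (digit_value z) (high_part - digit_value z)) digit_choices"
      proof (rule inj_onI)
        fix z1 z2 assume "z1 \<in> digit_choices" "z2 \<in> digit_choices"
          and "star gm (digit_value z1) (high_part - digit_value z1) =
               star gm (digit_value z2) (high_part - digit_value z2)"
        then show "z1 = z2"
          using inj_on_digit_value star_first_part[OF gm(1) False] by (metis add_left_cancel inj_onD)
      qed
    qed
  next
    case True
    then have "a 0 = 0" using gm(2) by simp
    let ?x = "\<lambda>z. digit_value z + low_digit_fix z"
    show ?thesis
    proof (rule that)
      show "(\<lambda>z. star [] (?x z) (high_part - ?x z)) ` digit_choices \<subseteq> Omega_set p ?n gm"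
        using star_nil_digit_value_in_Omega True \<open>a 0 = 0\<close> by auto
      have "0 < ?x z" if "z \<in> digit_choices" for z using digit_value_pos[OF that] by simp
      then show "inj_on (\<lambda>z. star [] (?x z) (high_part - ?x z)) digit_choices"
        using inj_on_digit_value_fix unfolding inj_on_def by (metis first_part_star_nil)
    qed
  qed
  show ?thesis using card_inj_on_le[OF f fin] .
qed

end

theorem lemma3p5:
  fixes p n k :: nat and a :: "nat \<Rightarrow> nat" and gm :: "nat list"
  assumes "prime p"
    and "k \<ge> 1"
    and "n = (\<Sum>i\<le>k. a i * p ^ i)"
    and "\<forall>i\<le>k. a i < p"
    and "a k \<noteq> 0"
    and "partition_of gm (a 0)"
  shows "card (cd (Omega_set p n gm)) = card (Omega_set p n gm) \<and>
         card (Omega_set p n gm) \<ge> ((a k + 1) div 2) * (\<Prod>i\<in>{1..k-1}. (a i + 1))"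
proof -
  interpret p_adic_digits p k a using assms(1,2,4,5) by unfold_locales auto
  have n: "n = a 0 + high_part" using assms(3) sum_digits_eq by simp
  have gm: "is_partition gm" "sum_list gm = a 0" using assms(6) by (auto simp: partition_of_def)
  have "p \<le> high_part" using dvd_high_part high_part_pos by (simp add: dvd_imp_le)
  moreover have "n - n mod p = high_part" using n dvd_high_part assms(4) by auto
  ultimately have "inj_on char_degree (Omega_set p n gm)"
    using inj_on_char_degree_Omega[OF assms(1) gm(1)] gm(2) assms(4) by simp
  then have "card (cd (Omega_set p n gm)) = card (Omega_set p n gm)"
    unfolding cd_def by (rule card_image)
  moreover have "card digit_choices \<le> card (Omega_set p n gm)"
    using card_digit_choices_le_Omega[OF gm] n by simp
  ultimately show ?thesis using card_digit_choices by simp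
qed

end
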